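(* For $n,m\ge2$ and $k\ge1$, let $X^{n,m}_k$ be the set of $p\in([0,1]\cap\mathbb Q)^{n^2m^2}$ for which there exists a $k$-approximate trace $\tau:\mathbb F(n,m)\to\mathbb D\cap\mathbb Q(i)$ that is $k$-adapted to $p$. Then each $X^{n,m}_k$ is recursively enumerable, uniformly in $k$, $n$ and $m$.
   Context: $\mathbb D$ is the closed unit disc in $\mathbb C$, $[n]=\{1,\dots,n\}$. $\mathbb F(n,m)$ is the free product of $n$ cyclic groups of order $m$, with generators $u_1,\dots,u_n$ and a fixed effective enumeration of its elements. Functions $\tau:\mathbb F(n,m)\to\mathbb D$ are extended linearly to $\mathbb Q(i)\mathbb F(n,m)$. Approximate traces: fix an effective enumeration $(R_l)_{l\ge1}$ (independent of the group, via a fixed coding of $\mathbb Q(i)$ and of indices into the enumeration of the group $G$) of all requirements of the forms "$\sum_{\lambda,\gamma}\overline{a_\lambda}a_\gamma\tau(\lambda^{-1}\gamma)\ge0$" for $\sum a_\lambda u_\lambda\in\mathbb Q(i)G$ and "$\tau(\gamma^{-1}\lambda\gamma)=\tau(\lambda)$" for $\lambda,\gamma\in G$. For $k\ge1$, the relaxation $R^k_l$ of the first kind says $\sum\overline{a_\lambda}a_\gamma\tau(\lambda^{-1}\gamma)$ is within $1/k$ of the nonnegative real axis, and of the second kind says $|\tau(\gamma^{-1}\lambda\gamma)-\tau(\lambda)|<1/k$. A function $\tau:G\to\mathbb D$ is a $k$-approximate trace on $G$ if $R^k_1,\dots,R^k_k$ hold. Adaptedness: in $C^*(\mathbb F(n,m))$,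 $e^{n,m}_{v,i}$ is the spectral projection of $u_v$ for eigenvalue $\xi_m^i$ ($\xi_m$ a primitive $m$-th root of unity). Fix a computable function $(v,w,i,j,k,n,m)\mapsto s^{n,m}_{v,w,i,j,k}\in\mathbb Q(i)\mathbb F(n,m)$ with $\|e^{n,m}_{v,i}e^{n,m}_{w,j}-s^{n,m}_{v,w,i,j,k}\|<1/k$ in $C^*(\mathbb F(n,m))$. A function $\tau:\mathbb F(n,m)\to\mathbb D$ is $k$-adapted to $p\in[0,1]^{n^2m^2}$ if $|p(i,j|v,w)-\tau(s^{n,m}_{v,w,i,j,k})|<1/k$ for all $v,w\in[n]$, $i,j\in[m]$. *)

theory Defs
  imports Complex_Main "HOL-Library.Nat_Bijection"
begin

datatype recf = RZero | RSucc | RProj nat | RComp recf "recf list" | RPrec recf recf | RMinim recf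

inductive evalr :: "recf \<Rightarrow> nat list \<Rightarrow> nat \<Rightarrow> bool" where
  ev_zero: "evalr RZero xs 0"
| ev_succ: "evalr RSucc (x # xs) (Suc x)"
| ev_proj: "i < length xs \<Longrightarrow> evalr (RProj i) xs (xs ! i)"
| ev_comp: "list_all2 (\<lambda>g y. evalr g xs y) gs ys \<Longrightarrow> evalr f ys z \<Longrightarrow> evalr (RComp f gs) xs z"
| ev_prec0: "evalr f xs z \<Longrightarrow> evalr (RPrec f g) (0 # xs) z"
| ev_precS: "evalr (RPrec f g) (n # xs) y \<Longrightarrow> evalr g (y # n # xs) z
             \<Longrightarrow> evalr (RPrec f g) (Suc n # xs) z"
| ev_minim: "evalr f (y # xs) 0 \<Longrightarrow> (\<forall>z<y. \<exists>v. evalr f (z # xs) (Suc v))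
             \<Longrightarrow> evalr (RMinim f) xs y"

definition computable :: "(nat \<Rightarrow> nat) \<Rightarrow> bool" where
  "computable g \<longleftrightarrow> (\<exists>f. \<forall>x. evalr f [x] (g x))"

definition re_set :: "nat set \<Rightarrow> bool" where
  "re_set A \<longleftrightarrow> (\<exists>f. \<forall>x. x \<in> A \<longleftrightarrow> (\<exists>y. evalr f [x] y))"

definition rat_code :: "rat \<Rightarrow> nat" where
  "rat_code q = (case quotient_of q of (a, b) \<Rightarrow> prod_encode (int_encode a, int_encode b))"

type_synonym gq = "rat \<times> rat"

definition gq_val :: "gq \<Rightarrow> complex" where
  "gq_val c = Complex (of_rat (fst c)) (of_rat (snd c))"

definition gq_code :: "gq \<Rightarrow> nat" where
  "gq_code c = prod_encode (rat_code (fst c), rat_code (snd c))"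

section \<open>The free product F(n,m) of n cyclic groups of order m (reduced words)\<close>

text \<open>A letter (v,e) stands for u_v^e, with 1 \<le> v \<le> n and 0 < e < m.\<close>
type_synonym fword = "(nat \<times> nat) list"

definition fp_carrier :: "nat \<Rightarrow> nat \<Rightarrow> fword set" where
  "fp_carrier n m = {w. (\<forall>(v, e) \<in> set w. 1 \<le> v \<and> v \<le> n \<and> 0 < e \<and> e < m)
                       \<and> (\<forall>i. Suc i < length w \<longrightarrow> fst (w ! i) \<noteq> fst (w ! Suc i))}"

fun fp_push :: "nat \<Rightarrow> nat \<times> nat \<Rightarrow> fword \<Rightarrow> fword" where
  "fp_push m (v, e) [] = [(v, e)]"
| "fp_push m (v, e) ((w, f) # ws) =
     (if v = w then (if (e + f) mod m = 0 then ws else (v, (e + f) mod m) # ws)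
      else (v, e) # (w, f) # ws)"

definition fp_mult :: "nat \<Rightarrow> fword \<Rightarrow> fword \<Rightarrow> fword" where
  "fp_mult m x y = foldr (fp_push m) x y"

definition fp_inv :: "nat \<Rightarrow> fword \<Rightarrow> fword" where
  "fp_inv m x = rev (map (\<lambda>(v, e). (v, m - e)) x)"

definition fp_genpow :: "nat \<Rightarrow> nat \<Rightarrow> nat \<Rightarrow> fword" where
  "fp_genpow m v t = (if t mod m = 0 then [] else [(v, t mod m)])"

definition word_code :: "fword \<Rightarrow> nat" where
  "word_code w = list_encode (map prod_encode w)"

section \<open>Complex group algebra of F(n,m): formal finite sums\<close>

type_synonym fgr = "(complex \<times> fword) list"

definition fgr_mult :: "nat \<Rightarrow> fgr \<Rightarrow> fgr \<Rightarrow> fgr" where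
  "fgr_mult m x y = concat (map (\<lambda>(a, g). map (\<lambda>(b, h). (a * b, fp_mult m g h)) y) x)"

definition fgr_star :: "nat \<Rightarrow> fgr \<Rightarrow> fgr" where
  "fgr_star m x = map (\<lambda>(a, g). (cnj a, fp_inv m g)) x"

definition fgr_diff :: "fgr \<Rightarrow> fgr \<Rightarrow> fgr" where
  "fgr_diff x y = x @ map (\<lambda>(b, h). (- b, h)) y"

definition fgr_eval :: "(fword \<Rightarrow> complex) \<Rightarrow> fgr \<Rightarrow> complex" where
  "fgr_eval \<tau> x = (\<Sum>(a, g) \<leftarrow> x. a * \<tau> g)"

text \<open>Normalised positive definite functions on F(n,m), i.e. the states of C*(F(n,m)).\<close>
definition pd_state :: "nat \<Rightarrow> nat \<Rightarrow> (fword \<Rightarrow> complex) \<Rightarrow> bool" where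
  "pd_state n m \<phi> \<longleftrightarrow> \<phi> [] = 1 \<and>
     (\<forall>x. set (map snd x) \<subseteq> fp_carrier n m \<longrightarrow>
        Im (fgr_eval \<phi> (fgr_mult m (fgr_star m x) x)) = 0 \<and>
        Re (fgr_eval \<phi> (fgr_mult m (fgr_star m x) x)) \<ge> 0)"

text \<open>Norm in the full group C*-algebra: ||x||^2 = sup over states phi of phi(x* x).\<close>
definition cstar_norm :: "nat \<Rightarrow> nat \<Rightarrow> fgr \<Rightarrow> real" where
  "cstar_norm n m x = sqrt (Sup {Re (fgr_eval \<phi> (fgr_mult m (fgr_star m x) x)) | \<phi>. pd_state n m \<phi>})"

text \<open>Primitive m-th root of unity xi_m = exp(2 pi i/m); spectral projection of u_v
  for the eigenvalue xi_m^i: e_{v,i} = (1/m) sum_{t<m} xi_m^{-it} u_v^t.\<close>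
definition spec_proj :: "nat \<Rightarrow> nat \<Rightarrow> nat \<Rightarrow> fgr" where
  "spec_proj m v i = map (\<lambda>t. (cis (- 2 * pi * real i * real t / real m) / of_nat m, fp_genpow m v t)) [0..<m]"

text \<open>An element of Q(i)G is a list of pairs (coefficient, index into the enumeration E of G).\<close>
type_synonym qelt = "(gq \<times> nat) list"

definition qelt_val :: "(nat \<Rightarrow> fword) \<Rightarrow> qelt \<Rightarrow> fgr" where
  "qelt_val En x = map (\<lambda>(c, l). (gq_val c, En l)) x"

definition qelt_code :: "qelt \<Rightarrow> nat" where
  "qelt_code x = list_encode (map (\<lambda>(c, l). prod_encode (gq_code c, l)) x)"

text \<open>PosReq a: sum_{lambda,gamma} conj(a_lambda) a_gamma tau(lambda^-1 gamma) \<ge> 0;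
  ConjReq lambda gamma: tau(gamma^-1 lambda gamma) = tau(lambda) (indices into the enumeration).\<close>
datatype req = PosReq qelt | ConjReq nat nat

definition req_code :: "req \<Rightarrow> nat" where
  "req_code r = (case r of PosReq x \<Rightarrow> prod_encode (0, qelt_code x)
                          | ConjReq a b \<Rightarrow> prod_encode (1, prod_encode (a, b)))"

definition req_relax :: "nat \<Rightarrow> nat \<Rightarrow> (nat \<Rightarrow> fword) \<Rightarrow> (fword \<Rightarrow> complex) \<Rightarrow> req \<Rightarrow> bool" where
  "req_relax k m En \<tau> r = (case r of
      PosReq x \<Rightarrow> (\<exists>t::real. t \<ge> 0 \<and>
          cmod (fgr_eval \<tau> (fgr_mult m (fgr_star m (qelt_val En x)) (qelt_val En x)) - of_real t) < 1 / real k)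
    | ConjReq a b \<Rightarrow>
          cmod (\<tau> (fp_mult m (fp_mult m (fp_inv m (En b)) (En a)) (En b)) - \<tau> (En a)) < 1 / real k)"

definition approx_trace :: "nat \<Rightarrow> nat \<Rightarrow> nat \<Rightarrow> (nat \<Rightarrow> nat \<Rightarrow> nat \<Rightarrow> fword) \<Rightarrow> (nat \<Rightarrow> req)
                             \<Rightarrow> (fword \<Rightarrow> complex) \<Rightarrow> bool" where
  "approx_trace k n m E R \<tau> \<longleftrightarrow> (\<forall>g \<in> fp_carrier n m. cmod (\<tau> g) \<le> 1) \<and>
      (\<forall>l \<in> {1..k}. req_relax k m (E n m) \<tau> (R l))"

text \<open>p(i,j|v,w) is written p i j v w.\<close>
type_synonym corr = "nat \<Rightarrow> nat \<Rightarrow> nat \<Rightarrow> nat \<Rightarrow> rat"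

definition adapted :: "nat \<Rightarrow> nat \<Rightarrow> nat \<Rightarrow> (nat \<Rightarrow> nat \<Rightarrow> nat \<Rightarrow> fword)
      \<Rightarrow> (nat \<Rightarrow> nat \<Rightarrow> nat \<Rightarrow> nat \<Rightarrow> nat \<Rightarrow> nat \<Rightarrow> nat \<Rightarrow> qelt) \<Rightarrow> corr \<Rightarrow> (fword \<Rightarrow> complex) \<Rightarrow> bool" where
  "adapted k n m E S p \<tau> \<longleftrightarrow>
     (\<forall>v \<in> {1..n}. \<forall>w \<in> {1..n}. \<forall>i \<in> {1..m}. \<forall>j \<in> {1..m}.
        cmod (of_real (of_rat (p i j v w)) - fgr_eval \<tau> (qelt_val (E n m) (S v w i j k n m))) < 1 / real k)"

definition Xset :: "nat \<Rightarrow> nat \<Rightarrow> nat \<Rightarrow> (nat \<Rightarrow> nat \<Rightarrow> nat \<Rightarrow> fword) \<Rightarrow> (nat \<Rightarrow> req)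
      \<Rightarrow> (nat \<Rightarrow> nat \<Rightarrow> nat \<Rightarrow> nat \<Rightarrow> nat \<Rightarrow> nat \<Rightarrow> nat \<Rightarrow> qelt) \<Rightarrow> corr set" where
  "Xset k n m E R S = {p.
     (\<forall>v \<in> {1..n}. \<forall>w \<in> {1..n}. \<forall>i \<in> {1..m}. \<forall>j \<in> {1..m}. 0 \<le> p i j v w \<and> p i j v w \<le> 1) \<and>
     (\<exists>\<tau>. approx_trace k n m E R \<tau> \<and>
          (\<forall>g \<in> fp_carrier n m. Re (\<tau> g) \<in> \<rat> \<and> Im (\<tau> g) \<in> \<rat>) \<and>
          adapted k n m E S p \<tau>)}"

definition corr_list :: "nat \<Rightarrow> nat \<Rightarrow> corr \<Rightarrow> rat list" where
  "corr_list n m p = [p i j v w. v \<leftarrow> [1..<n+1], w \<leftarrow> [1..<n+1], i \<leftarrow> [1..<m+1], j \<leftarrow> [1..<m+1]]"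

definition kmnp_code :: "nat \<Rightarrow> nat \<Rightarrow> nat \<Rightarrow> corr \<Rightarrow> nat" where
  "kmnp_code k n m p = list_encode [k, n, m, list_encode (map rat_code (corr_list n m p))]"

text \<open>All X^{n,m}_k at once, as a set of codes of tuples (k,n,m,p).\<close>
definition Xcodes :: "(nat \<Rightarrow> nat \<Rightarrow> nat \<Rightarrow> fword) \<Rightarrow> (nat \<Rightarrow> req)
      \<Rightarrow> (nat \<Rightarrow> nat \<Rightarrow> nat \<Rightarrow> nat \<Rightarrow> nat \<Rightarrow> nat \<Rightarrow> nat \<Rightarrow> qelt) \<Rightarrow> nat set" where
  "Xcodes E R S = {kmnp_code k n m p | k n m p.
       2 \<le> n \<and> 2 \<le> m \<and> 1 \<le> k \<and> p \<in> Xset k n m E R S}"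

end

theory Submission
  imports Defs
begin

text \<open>
  Whether \<open>p\<close> lies in \<open>Xset k n m E R S\<close> depends only on finitely many values of the trace:
  those at the words occurring in the requirements \<open>R l\<close>, \<open>1 \<le> l \<le> k\<close>, and in the elements
  \<open>S v w i j k n m\<close>. A finite table of Gaussian-rational values at these words, extended by 0
  elsewhere, is therefore a certificate for \<open>p\<close>. Since \<open>E\<close>, \<open>R\<close> and \<open>S\<close> are computable and every
  condition is an inequality between rationals, it is decidable whether a number is a
  certificate for a code of \<open>(k, n, m, p)\<close>. So \<open>Xcodes E R S\<close> is the projection of a decidable
  relation, and unbounded search for a certificate enumerates it.
\<close>

section \<open>Partial recursive functions of fixed arity\<close>

inductive_cases ev_RZeroE: "evalr RZero xs y"
inductive_cases ev_RSuccE: "evalr RSucc xs y"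
inductive_cases ev_RProjE: "evalr (RProj i) xs y"
inductive_cases ev_RCompE: "evalr (RComp f gs) xs y"
inductive_cases ev_RPrecE: "evalr (RPrec f g) xs y"
inductive_cases ev_RMinimE: "evalr (RMinim f) xs y"

lemma list_all2_evalr_det:
  assumes "list_all2 (\<lambda>g y. evalr g xs y \<and> (\<forall>y'. evalr g xs y' \<longrightarrow> y = y')) gs ys"
    and "list_all2 (\<lambda>g y. evalr g xs y) gs ys'"
  shows "ys = ys'"
  using assms
proof (induction gs arbitrary: ys ys')
  case Nil then show ?case by simp
next
  case (Cons g gs)
  from Cons.prems(1) obtain y ys1 where a: "ys = y # ys1" "evalr g xs y" "\<forall>y'. evalr g xs y' \<longrightarrow> y = y'"
    "list_all2 (\<lambda>g y. evalr g xs y \<and> (\<forall>y'. evalr g xs y' \<longrightarrow> y = y')) gs ys1"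
    unfolding list_all2_Cons1 by blast
  from Cons.prems(2) obtain y' ys2 where b: "ys' = y' # ys2" "evalr g xs y'"
    "list_all2 (\<lambda>g y. evalr g xs y) gs ys2"
    unfolding list_all2_Cons1 by blast
  have "y = y'" using a(3) b(2) by blast
  moreover have "ys1 = ys2" using Cons.IH[OF a(4) b(3)] .
  ultimately show ?case using a(1) b(1) by simp
qed

lemma evalr_det: "evalr f xs y \<Longrightarrow> evalr f xs y' \<Longrightarrow> y = y'"
proof (induction arbitrary: y' rule: evalr.induct)
  case (ev_zero xs) from ev_zero.prems show ?case by (rule ev_RZeroE) simp
next
  case (ev_succ x xs) from ev_succ.prems show ?case by (rule ev_RSuccE) simp
next
  case (ev_proj i xs) from ev_proj.prems show ?case by (rule ev_RProjE) simp
next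
  case (ev_comp xs gs ys f z)
  from ev_comp.prems obtain ys' where a: "list_all2 (\<lambda>g y. evalr g xs y) gs ys'" and b: "evalr f ys' y'"
    by (rule ev_RCompE) blast
  have "ys = ys'" by (rule list_all2_evalr_det[OF ev_comp.IH(1) a])
  then show ?case using ev_comp.IH(2) b by blast
next
  case (ev_prec0 f xs z g)
  from ev_prec0.prems have "evalr f xs y'"
    by (rule ev_RPrecE) auto
  then show ?case using ev_prec0.IH by blast
next
  case (ev_precS f g n xs y z)
  from ev_precS.prems obtain y2 where a: "evalr (RPrec f g) (n # xs) y2" and b: "evalr g (y2 # n # xs) y'"
    by (rule ev_RPrecE) auto
  from ev_precS.IH(1)[OF a] have "y = y2" .
  with b ev_precS.IH(2) show ?case by blast
next
  case (ev_minim f y xs)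
  from ev_minim.prems have "evalr f (y' # xs) 0" and "\<forall>z<y'. \<exists>v. evalr f (z # xs) (Suc v)"
    by (rule ev_RMinimE, blast)+
  then have "\<not> y < y'" and "\<not> y' < y"
    using ev_minim.IH by (metis Zero_not_Suc)+
  then show ?case by simp
qed

definition rec_fn :: "nat \<Rightarrow> (nat list \<Rightarrow> nat) \<Rightarrow> bool" where
  "rec_fn k f \<longleftrightarrow> (\<exists>r. \<forall>xs. length xs = k \<longrightarrow> evalr r xs (f xs))"

definition rec_pred :: "nat \<Rightarrow> (nat list \<Rightarrow> bool) \<Rightarrow> bool" where
  "rec_pred k P \<longleftrightarrow> rec_fn k (\<lambda>xs. if P xs then 1 else 0)"

named_theorems rec_intros

lemma rec_fn_cong: "rec_fn k f \<Longrightarrow> (\<And>xs. length xs = k \<Longrightarrow> f xs = g xs) \<Longrightarrow> rec_fn k g"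
  unfolding rec_fn_def by metis

lemma rec_pred_cong: "rec_pred k P \<Longrightarrow> (\<And>xs. length xs = k \<Longrightarrow> P xs = Q xs) \<Longrightarrow> rec_pred k Q"
  unfolding rec_pred_def by (erule rec_fn_cong) simp

lemma rec_fn_const[rec_intros]: "rec_fn k (\<lambda>xs. c)"
proof (induction c)
  case 0 show ?case unfolding rec_fn_def by (metis ev_zero)
next
  case (Suc c)
  then obtain r where r: "\<forall>xs. length xs = k \<longrightarrow> evalr r xs c" unfolding rec_fn_def by blast
  show ?case unfolding rec_fn_def
  proof (rule exI[of _ "RComp RSucc [r]"], intro allI impI)
    fix xs :: "nat list" assume "length xs = k"
    then show "evalr (RComp RSucc [r]) xs (Suc c)"
      using r by (auto intro!: ev_comp[of _ _ "[c]"] ev_succ)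
  qed
qed

lemma rec_fn_proj[rec_intros]: "i < k \<Longrightarrow> rec_fn k (\<lambda>xs. xs ! i)"
  unfolding rec_fn_def by (rule exI[of _ "RProj i"]) (auto intro: ev_proj)

lemma rec_fn_Suc[rec_intros]: "rec_fn k a \<Longrightarrow> rec_fn k (\<lambda>xs. Suc (a xs))"
  unfolding rec_fn_def
  by (erule exE, rule_tac x="RComp RSucc [r]" in exI) (auto intro!: ev_comp[of _ _ "[_]"] ev_succ)

lemma rec_fn_list:
  "(\<forall>g\<in>set gs. rec_fn k g) \<Longrightarrow> \<exists>rs. \<forall>xs. length xs = k \<longrightarrow> list_all2 (\<lambda>r y. evalr r xs y) rs (map (\<lambda>g. g xs) gs)"
proof (induction gs)
  case Nil then show ?case by simp
next
  case (Cons g gs)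
  then obtain rs where rs: "\<forall>xs. length xs = k \<longrightarrow> list_all2 (\<lambda>r y. evalr r xs y) rs (map (\<lambda>g. g xs) gs)"
    by auto
  from Cons.prems obtain r where r: "\<forall>xs. length xs = k \<longrightarrow> evalr r xs (g xs)" unfolding rec_fn_def by auto
  show ?case by (rule exI[of _ "r # rs"]) (simp add: r rs)
qed

lemma rec_fn_comp: "rec_fn (length gs) h \<Longrightarrow> \<forall>g\<in>set gs. rec_fn k g \<Longrightarrow> rec_fn k (\<lambda>xs. h (map (\<lambda>g. g xs) gs))"
proof -
  assume h: "rec_fn (length gs) h" and g: "\<forall>g\<in>set gs. rec_fn k g"
  from h obtain rh where rh: "\<forall>xs. length xs = length gs \<longrightarrow> evalr rh xs (h xs)" unfolding rec_fn_def by auto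
  from rec_fn_list[OF g] obtain rs where rs: "\<forall>xs. length xs = k \<longrightarrow> list_all2 (\<lambda>r y. evalr r xs y) rs (map (\<lambda>g. g xs) gs)"
    by auto
  show ?thesis unfolding rec_fn_def
  proof (rule exI[of _ "RComp rh rs"], intro allI impI)
    fix xs :: "nat list" assume "length xs = k"
    then show "evalr (RComp rh rs) xs (h (map (\<lambda>g. g xs) gs))"
      using rs rh by (auto intro!: ev_comp[of _ _ "map (\<lambda>g. g xs) gs"])
  qed
qed

lemma rec_fn_comp1: "rec_fn 1 (\<lambda>ys. h (ys!0)) \<Longrightarrow> rec_fn k a \<Longrightarrow> rec_fn k (\<lambda>xs. h (a xs))"
  using rec_fn_comp[of "[a]" "\<lambda>ys. h (ys!0)" k] by simp

lemma rec_fn_comp2: "rec_fn 2 (\<lambda>ys. h (ys!0) (ys!1)) \<Longrightarrow> rec_fn k a \<Longrightarrow> rec_fn k b \<Longrightarrow> rec_fn k (\<lambda>xs. h (a xs) (b xs))"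
  using rec_fn_comp[of "[a, b]" "\<lambda>ys. h (ys!0) (ys!1)" k] by (simp add: numeral_2_eq_2)

lemma rec_fn_comp3:
  "rec_fn 3 (\<lambda>ys. h (ys!0) (ys!1) (ys!2)) \<Longrightarrow> rec_fn k a \<Longrightarrow> rec_fn k b \<Longrightarrow> rec_fn k c \<Longrightarrow>
   rec_fn k (\<lambda>xs. h (a xs) (b xs) (c xs))"
  using rec_fn_comp[of "[a, b, c]" "\<lambda>ys. h (ys!0) (ys!1) (ys!2)" k] by (simp add: numeral_3_eq_3)

lemma rec_fn_comp4:
  "rec_fn 4 (\<lambda>ys. h (ys!0) (ys!1) (ys!2) (ys!3)) \<Longrightarrow>
   rec_fn k a \<Longrightarrow> rec_fn k b \<Longrightarrow> rec_fn k c \<Longrightarrow> rec_fn k d \<Longrightarrow>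
   rec_fn k (\<lambda>xs. h (a xs) (b xs) (c xs) (d xs))"
  using rec_fn_comp[of "[a, b, c, d]" "\<lambda>ys. h (ys!0) (ys!1) (ys!2) (ys!3)" k]
  by (simp add: eval_nat_numeral)

lemma rec_fn_comp5:
  "rec_fn 5 (\<lambda>ys. h (ys!0) (ys!1) (ys!2) (ys!3) (ys!4)) \<Longrightarrow>
   rec_fn k a0 \<Longrightarrow> rec_fn k a1 \<Longrightarrow> rec_fn k a2 \<Longrightarrow> rec_fn k a3 \<Longrightarrow> rec_fn k a4 \<Longrightarrow>
   rec_fn k (\<lambda>xs. h (a0 xs) (a1 xs) (a2 xs) (a3 xs) (a4 xs))"
  using rec_fn_comp[of "[a0, a1, a2, a3, a4]" "\<lambda>ys. h (ys!0) (ys!1) (ys!2) (ys!3) (ys!4)" k]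
  by (simp add: eval_nat_numeral)

lemma rec_fn_comp8:
  "rec_fn 8 (\<lambda>ys. h (ys!0) (ys!1) (ys!2) (ys!3) (ys!4) (ys!5) (ys!6) (ys!7)) \<Longrightarrow>
   rec_fn k a0 \<Longrightarrow> rec_fn k a1 \<Longrightarrow> rec_fn k a2 \<Longrightarrow> rec_fn k a3 \<Longrightarrow>
   rec_fn k a4 \<Longrightarrow> rec_fn k a5 \<Longrightarrow> rec_fn k a6 \<Longrightarrow> rec_fn k a7 \<Longrightarrow>
   rec_fn k (\<lambda>xs. h (a0 xs) (a1 xs) (a2 xs) (a3 xs) (a4 xs) (a5 xs) (a6 xs) (a7 xs))"
  using rec_fn_comp[of "[a0, a1, a2, a3, a4, a5, a6, a7]" "\<lambda>ys. h (ys!0) (ys!1) (ys!2) (ys!3) (ys!4) (ys!5) (ys!6) (ys!7)" k]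
  by (simp add: eval_nat_numeral)

lemma rec_fn_comp9:
  "rec_fn 9 (\<lambda>ys. h (ys!0) (ys!1) (ys!2) (ys!3) (ys!4) (ys!5) (ys!6) (ys!7) (ys!8)) \<Longrightarrow>
   rec_fn k a0 \<Longrightarrow> rec_fn k a1 \<Longrightarrow> rec_fn k a2 \<Longrightarrow> rec_fn k a3 \<Longrightarrow>
   rec_fn k a4 \<Longrightarrow> rec_fn k a5 \<Longrightarrow> rec_fn k a6 \<Longrightarrow> rec_fn k a7 \<Longrightarrow> rec_fn k a8 \<Longrightarrow>
   rec_fn k (\<lambda>xs. h (a0 xs) (a1 xs) (a2 xs) (a3 xs) (a4 xs) (a5 xs) (a6 xs) (a7 xs) (a8 xs))"
  using rec_fn_comp[of "[a0, a1, a2, a3, a4, a5, a6, a7, a8]" "\<lambda>ys. h (ys!0) (ys!1) (ys!2) (ys!3) (ys!4) (ys!5) (ys!6) (ys!7) (ys!8)" k]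
  by (simp add: eval_nat_numeral)

primrec natrec :: "nat \<Rightarrow> (nat \<Rightarrow> nat \<Rightarrow> nat) \<Rightarrow> nat \<Rightarrow> nat" where
  "natrec b s 0 = b"
| "natrec b s (Suc n) = s n (natrec b s n)"

text \<open>The step program of \<open>RPrec\<close> receives the previous value first and the counter second.\<close>

lemma rec_fn_prec:
  assumes "rec_fn k b" "rec_fn (Suc (Suc k)) (\<lambda>ys. s (ys!1) (ys!0) (drop 2 ys))"
  shows "rec_fn (Suc k) (\<lambda>ys. natrec (b (tl ys)) (\<lambda>n r. s n r (tl ys)) (ys!0))"
proof -
  from assms obtain rb rs where rb: "\<forall>xs. length xs = k \<longrightarrow> evalr rb xs (b xs)"
    and rs: "\<forall>ys. length ys = Suc (Suc k) \<longrightarrow> evalr rs ys (s (ys!1) (ys!0) (drop 2 ys))"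
    unfolding rec_fn_def by blast
  have *: "evalr (RPrec rb rs) (n # xs) (natrec (b xs) (\<lambda>n r. s n r xs) n)" if "length xs = k" for n xs
  proof (induction n)
    case 0 then show ?case using rb that by (auto intro: ev_prec0)
  next
    case (Suc n)
    have "evalr rs (natrec (b xs) (\<lambda>n r. s n r xs) n # n # xs) (s n (natrec (b xs) (\<lambda>n r. s n r xs) n) xs)"
      using rs[rule_format, of "natrec (b xs) (\<lambda>n r. s n r xs) n # n # xs"] that by simp
    then show ?case using Suc by (auto intro: ev_precS)
  qed
  show ?thesis unfolding rec_fn_def
    by (rule exI[of _ "RPrec rb rs"]) (auto simp: length_Suc_conv intro: *)
qed

lemma rec_fn_natrec[rec_intros]:
  assumes "rec_fn k b" "rec_fn (Suc (Suc k)) (\<lambda>ys. s (ys!1) (ys!0) (drop 2 ys))" "rec_fn k c"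
  shows "rec_fn k (\<lambda>xs. natrec (b xs) (\<lambda>n r. s n r xs) (c xs))"
proof -
  let ?gs = "c # map (\<lambda>i xs. xs ! i) [0..<k]"
  have "rec_fn k (\<lambda>xs. (\<lambda>ys. natrec (b (tl ys)) (\<lambda>n r. s n r (tl ys)) (ys!0)) (map (\<lambda>g. g xs) ?gs))"
    by (rule rec_fn_comp) (use rec_fn_prec[OF assms(1,2)] assms(3) rec_fn_proj in auto)
  then show ?thesis
  proof (rule rec_fn_cong)
    fix xs :: "nat list" assume "length xs = k"
    then have "map (\<lambda>g. g xs) (map (\<lambda>i xs. xs ! i) [0..<k]) = xs"
      using map_nth[of xs] by (simp add: comp_def)
    then show "(\<lambda>ys. natrec (b (tl ys)) (\<lambda>n r. s n r (tl ys)) (ys!0)) (map (\<lambda>g. g xs) ?gs)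
       = natrec (b xs) (\<lambda>n r. s n r xs) (c xs)" by simp
  qed
qed

lemma rec_fn_drop_nth[rec_intros]: "i + j < k \<Longrightarrow> rec_fn k (\<lambda>xs. drop j xs ! i)"
  by (rule rec_fn_cong[OF rec_fn_proj[of "j+i"]]) auto

lemma rec_fn_drop_drop_nth[rec_intros]: "i + j + j' < k \<Longrightarrow> rec_fn k (\<lambda>xs. drop j (drop j' xs) ! i)"
  by (rule rec_fn_cong[OF rec_fn_proj[of "j'+j+i"]]) (auto simp: ac_simps)

lemma natrec_add: "natrec x (\<lambda>n r. Suc r) y = x + y" by (induction y) auto
lemma natrec_pred: "natrec 0 (\<lambda>n r. n) x = x - 1" by (induction x) auto
lemma natrec_sub: "natrec x (\<lambda>n r. r - 1) y = x - y" by (induction y) auto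
lemma natrec_mult: "natrec 0 (\<lambda>n r. r + x) y = x * y" by (induction y) auto
lemma natrec_funpow: "natrec b (\<lambda>n r. g r) n = (g ^^ n) b" by (induction n) auto

lemma rec_fn_add2: "rec_fn 2 (\<lambda>ys. ys!0 + ys!1)"
  apply (rule rec_fn_cong[of _ "\<lambda>xs. natrec (xs!0) (\<lambda>n r. Suc r) (xs!1)"])
  subgoal by (rule rec_intros | simp)+
  by (simp only: natrec_add)

lemma rec_fn_add[rec_intros]: "rec_fn k a \<Longrightarrow> rec_fn k b \<Longrightarrow> rec_fn k (\<lambda>xs. a xs + b xs)"
  by (rule rec_fn_comp2[OF rec_fn_add2])

lemma rec_fn_diff2: "rec_fn 2 (\<lambda>ys. ys!0 - ys!1)"
  apply (rule rec_fn_cong[of _ "\<lambda>xs. natrec (xs!0) (\<lambda>n r. natrec 0 (\<lambda>n' r'. n') r) (xs!1)"])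
  subgoal by (rule rec_intros | simp)+
  by (simp only: natrec_sub natrec_pred)

lemma rec_fn_diff[rec_intros]: "rec_fn k a \<Longrightarrow> rec_fn k b \<Longrightarrow> rec_fn k (\<lambda>xs. a xs - b xs)"
  by (rule rec_fn_comp2[OF rec_fn_diff2])

lemma rec_fn_mult2: "rec_fn 2 (\<lambda>ys. ys!0 * ys!1)"
  apply (rule rec_fn_cong[of _ "\<lambda>xs. natrec 0 (\<lambda>n r. r + xs!0) (xs!1)"])
  subgoal by (rule rec_intros | simp)+
  by (simp only: natrec_mult)

lemma rec_fn_mult[rec_intros]: "rec_fn k a \<Longrightarrow> rec_fn k b \<Longrightarrow> rec_fn k (\<lambda>xs. a xs * b xs)"
  by (rule rec_fn_comp2[OF rec_fn_mult2])

lemma rec_fn_If[rec_intros]: "rec_pred k P \<Longrightarrow> rec_fn k a \<Longrightarrow> rec_fn k b \<Longrightarrow> rec_fn k (\<lambda>xs. if P xs then a xs else b xs)"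
  unfolding rec_pred_def
  apply (rule rec_fn_cong[of _ "\<lambda>xs. (if P xs then 1 else 0) * a xs + (1 - (if P xs then 1 else 0)) * b xs"])
  subgoal by (rule rec_fn_add rec_fn_mult rec_fn_diff rec_fn_const | assumption)+
  by simp

lemma rec_pred_le[rec_intros]: "rec_fn k a \<Longrightarrow> rec_fn k b \<Longrightarrow> rec_pred k (\<lambda>xs. a xs \<le> b xs)"
  unfolding rec_pred_def
  apply (rule rec_fn_cong[of _ "\<lambda>xs. 1 - (a xs - b xs)"])
  subgoal by (rule rec_fn_diff rec_fn_const | assumption)+
  by simp

lemma rec_pred_less[rec_intros]: "rec_fn k a \<Longrightarrow> rec_fn k b \<Longrightarrow> rec_pred k (\<lambda>xs. a xs < b xs)"
  unfolding rec_pred_def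
  apply (rule rec_fn_cong[of _ "\<lambda>xs. 1 - (Suc (a xs) - b xs)"])
  subgoal by (rule rec_fn_diff rec_fn_Suc rec_fn_const | assumption)+
  by simp

lemma rec_pred_conj[rec_intros]: "rec_pred k P \<Longrightarrow> rec_pred k Q \<Longrightarrow> rec_pred k (\<lambda>xs. P xs \<and> Q xs)"
  unfolding rec_pred_def
  apply (rule rec_fn_cong[of _ "\<lambda>xs. (if P xs then 1 else 0) * (if Q xs then 1 else 0)"])
  subgoal by (rule rec_fn_mult | assumption)+
  by simp

lemma rec_pred_not[rec_intros]: "rec_pred k P \<Longrightarrow> rec_pred k (\<lambda>xs. \<not> P xs)"
  unfolding rec_pred_def
  apply (rule rec_fn_cong[of _ "\<lambda>xs. 1 - (if P xs then 1 else 0)"])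
  subgoal by (rule rec_fn_diff rec_fn_const | assumption)+
  by simp

lemma rec_pred_disj[rec_intros]: "rec_pred k P \<Longrightarrow> rec_pred k Q \<Longrightarrow> rec_pred k (\<lambda>xs. P xs \<or> Q xs)"
  apply (rule rec_pred_cong[of _ "\<lambda>xs. \<not> (\<not> P xs \<and> \<not> Q xs)"])
  subgoal by (rule rec_pred_not rec_pred_conj | assumption)+
  by simp

lemma rec_pred_eq[rec_intros]: "rec_fn k a \<Longrightarrow> rec_fn k b \<Longrightarrow> rec_pred k (\<lambda>xs. a xs = b xs)"
  apply (rule rec_pred_cong[of _ "\<lambda>xs. a xs \<le> b xs \<and> b xs \<le> a xs"])
  subgoal by (rule rec_pred_le rec_pred_conj | assumption)+
  by auto

lemma rec_pred_const[rec_intros]: "rec_pred k (\<lambda>xs. c)"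
  unfolding rec_pred_def by (rule rec_fn_const)

lemma rec_pred_If[rec_intros]: "rec_pred k P \<Longrightarrow> rec_pred k Q \<Longrightarrow> rec_pred k R \<Longrightarrow> rec_pred k (\<lambda>xs. if P xs then Q xs else R xs)"
  apply (rule rec_pred_cong[of _ "\<lambda>xs. (P xs \<and> Q xs) \<or> (\<not> P xs \<and> R xs)"])
  subgoal by (rule rec_pred_disj rec_pred_conj rec_pred_not | assumption)+
  by simp

lemma rec_pred_comp1:
  "rec_pred 1 (\<lambda>ys. P (ys!0)) \<Longrightarrow>
   rec_fn k a0 \<Longrightarrow>
   rec_pred k (\<lambda>xs. P (a0 xs))"
  unfolding rec_pred_def by (rule rec_fn_comp1[where h="\<lambda>x0. if P x0 then 1 else 0"])

lemma rec_pred_comp2: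
  "rec_pred 2 (\<lambda>ys. P (ys!0) (ys!1)) \<Longrightarrow>
   rec_fn k a0 \<Longrightarrow> rec_fn k a1 \<Longrightarrow>
   rec_pred k (\<lambda>xs. P (a0 xs) (a1 xs))"
  unfolding rec_pred_def by (rule rec_fn_comp2[where h="\<lambda>x0 x1. if P x0 x1 then 1 else 0"])

lemma rec_pred_comp5:
  "rec_pred 5 (\<lambda>ys. P (ys!0) (ys!1) (ys!2) (ys!3) (ys!4)) \<Longrightarrow>
   rec_fn k a0 \<Longrightarrow> rec_fn k a1 \<Longrightarrow> rec_fn k a2 \<Longrightarrow> rec_fn k a3 \<Longrightarrow> rec_fn k a4 \<Longrightarrow>
   rec_pred k (\<lambda>xs. P (a0 xs) (a1 xs) (a2 xs) (a3 xs) (a4 xs))"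
  unfolding rec_pred_def by (rule rec_fn_comp5[where h="\<lambda>x0 x1 x2 x3 x4. if P x0 x1 x2 x3 x4 then 1 else 0"])

lemma rec_pred_comp9:
  "rec_pred 9 (\<lambda>ys. P (ys!0) (ys!1) (ys!2) (ys!3) (ys!4) (ys!5) (ys!6) (ys!7) (ys!8)) \<Longrightarrow>
   rec_fn k a0 \<Longrightarrow> rec_fn k a1 \<Longrightarrow> rec_fn k a2 \<Longrightarrow> rec_fn k a3 \<Longrightarrow>
   rec_fn k a4 \<Longrightarrow> rec_fn k a5 \<Longrightarrow> rec_fn k a6 \<Longrightarrow> rec_fn k a7 \<Longrightarrow> rec_fn k a8 \<Longrightarrow>
   rec_pred k (\<lambda>xs. P (a0 xs) (a1 xs) (a2 xs) (a3 xs) (a4 xs) (a5 xs) (a6 xs) (a7 xs) (a8 xs))"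
  unfolding rec_pred_def by (rule rec_fn_comp9[where h="\<lambda>x0 x1 x2 x3 x4 x5 x6 x7 x8. if P x0 x1 x2 x3 x4 x5 x6 x7 x8 then 1 else 0"])

lemma re_set_Ex_rec_pred:
  assumes "rec_pred 2 (\<lambda>ys. Q (ys!0) (ys!1))"
  shows "re_set {x. \<exists>y. Q x y}"
proof -
  have "rec_pred 2 (\<lambda>ys. \<not> Q (ys!1) (ys!0))"
    by (rule rec_pred_not, rule rec_pred_comp2[OF assms]) (rule rec_fn_proj; simp)+
  then obtain r where r_def: "\<forall>xs. length xs = 2 \<longrightarrow> evalr r xs (if \<not> Q (xs!1) (xs!0) then 1 else 0)"
    unfolding rec_pred_def rec_fn_def by blast
  have r: "evalr r [y, x] (if Q x y then 0 else 1)" for x y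
    using r_def[rule_format, of "[y, x]"] by (cases "Q x y") simp_all
  have "(\<exists>y. Q x y) \<longleftrightarrow> (\<exists>y. evalr (RMinim r) [x] y)" for x
  proof
    assume "\<exists>y. Q x y"
    define y0 where "y0 = (LEAST y. Q x y)"
    have "Q x y0" unfolding y0_def using \<open>\<exists>y. Q x y\<close> by (rule LeastI_ex)
    then have "evalr r [y0, x] 0" using r[of y0 x] by simp
    moreover have "evalr r [z, x] (Suc 0)" if "z < y0" for z
      using r[of z x] not_less_Least[OF that[unfolded y0_def]] by simp
    ultimately have "evalr (RMinim r) [x] y0" by (intro ev_minim) auto
    then show "\<exists>y. evalr (RMinim r) [x] y" ..
  next
    assume "\<exists>y. evalr (RMinim r) [x] y"
    then obtain y where "evalr r [y, x] 0" by (blast elim: ev_RMinimE)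
    then show "\<exists>y. Q x y" using evalr_det[OF r[of y x]] by (metis one_neq_zero)
  qed
  then show ?thesis unfolding re_set_def by auto
qed

lemma computable_imp_rec_fn: "computable g \<Longrightarrow> rec_fn 1 (\<lambda>ys. g (ys!0))"
  unfolding computable_def rec_fn_def
proof (elim exE, intro exI allI impI)
  fix f and xs :: "nat list" assume f: "\<forall>x. evalr f [x] (g x)" and l: "length xs = 1"
  then have "xs = [xs!0]" by (cases xs) auto
  then show "evalr f xs (g (xs!0))" using f by metis
qed

section \<open>Bounded quantification, division and pairing\<close>

definition all_less :: "nat \<Rightarrow> (nat \<Rightarrow> bool) \<Rightarrow> bool" where
  "all_less c P \<longleftrightarrow> (\<forall>i<c. P i)"

lemma natrec_all_less: "natrec 1 (\<lambda>n r. if r = 1 \<and> P n then 1 else 0) c = (if all_less c P then 1 else 0)"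
  unfolding all_less_def by (induction c) (auto simp: less_Suc_eq)

lemma rec_pred_all_less[rec_intros]:
  assumes "rec_pred (Suc (Suc k)) (\<lambda>ys. P (ys!1) (drop 2 ys))" "rec_fn k c"
  shows "rec_pred k (\<lambda>xs. all_less (c xs) (\<lambda>i. P i xs))"
  unfolding rec_pred_def
  apply (rule rec_fn_cong[of _ "\<lambda>xs. natrec 1 (\<lambda>n r. if r = 1 \<and> P n xs then 1 else 0) (c xs)"])
  subgoal by (rule rec_intros assms | simp)+
  by (simp only: natrec_all_less)

lemma ball_atLeastAtMost_1_iff: "(\<forall>l\<in>{1..k}. P l) \<longleftrightarrow> (\<forall>l<k. P (Suc l))"
proof
  assume "\<forall>l\<in>{1..k}. P l"
  then show "\<forall>l<k. P (Suc l)" by simp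
next
  assume "\<forall>l<k. P (Suc l)"
  then show "\<forall>l\<in>{1..k}. P l" by (metis Suc_pred atLeastAtMost_iff le_simps(3) not_one_le_zero zero_less_iff_neq_zero)
qed

lemma natrec_mod: "natrec 0 (\<lambda>i r. if Suc r = m then 0 else Suc r) x = x mod m"
  by (induction x) (auto simp: mod_Suc)

lemma rec_fn_mod2: "rec_fn 2 (\<lambda>ys. ys!0 mod ys!1)"
  apply (rule rec_fn_cong[of _ "\<lambda>xs. natrec 0 (\<lambda>i r. if Suc r = xs!1 then 0 else Suc r) (xs!0)"])
  subgoal by (rule rec_intros | simp)+
  by (simp only: natrec_mod)

lemma rec_fn_mod[rec_intros]: "rec_fn k a \<Longrightarrow> rec_fn k b \<Longrightarrow> rec_fn k (\<lambda>xs. a xs mod b xs)"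
  by (rule rec_fn_comp2[OF rec_fn_mod2])

lemma natrec_div: "natrec 0 (\<lambda>i r. if Suc (i mod m) = m then Suc r else r) x = x div m"
proof (induction x)
  case 0 then show ?case by simp
next
  case (Suc x)
  have "Suc x mod m = 0 \<longleftrightarrow> Suc (x mod m) = m" by (simp add: mod_Suc)
  then show ?case using Suc by (simp add: div_Suc)
qed

lemma rec_fn_div2: "rec_fn 2 (\<lambda>ys. ys!0 div ys!1)"
  apply (rule rec_fn_cong[of _ "\<lambda>xs. natrec 0 (\<lambda>i r. if Suc (i mod xs!1) = xs!1 then Suc r else r) (xs!0)"])
  subgoal by (rule rec_intros | simp)+
  by (simp only: natrec_div)

lemma rec_fn_div[rec_intros]: "rec_fn k a \<Longrightarrow> rec_fn k b \<Longrightarrow> rec_fn k (\<lambda>xs. a xs div b xs)"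
  by (rule rec_fn_comp2[OF rec_fn_div2])

lemma natrec_triangle: "natrec 0 (\<lambda>i r. r + Suc i) n = triangle n"
  by (induction n) auto

lemma rec_fn_triangle1: "rec_fn 1 (\<lambda>ys. triangle (ys!0))"
  apply (rule rec_fn_cong[of _ "\<lambda>xs. natrec 0 (\<lambda>i r. r + Suc i) (xs!0)"])
  subgoal by (rule rec_intros | simp)+
  by (simp only: natrec_triangle)

lemma rec_fn_triangle[rec_intros]: "rec_fn k a \<Longrightarrow> rec_fn k (\<lambda>xs. triangle (a xs))"
  by (rule rec_fn_comp1[OF rec_fn_triangle1])

lemma rec_fn_prod_encode2: "rec_fn 2 (\<lambda>ys. prod_encode (ys!0, ys!1))"
  apply (rule rec_fn_cong[of _ "\<lambda>xs. triangle (xs!0 + xs!1) + xs!0"])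
  subgoal by (rule rec_intros | simp)+
  by (simp add: prod_encode_def)

lemma rec_fn_prod_encode[rec_intros]: "rec_fn k a \<Longrightarrow> rec_fn k b \<Longrightarrow> rec_fn k (\<lambda>xs. prod_encode (a xs, b xs))"
  by (rule rec_fn_comp2[OF rec_fn_prod_encode2])

lemma triangle_mono: "m \<le> n \<Longrightarrow> triangle m \<le> triangle n"
  by (induction n rule: dec_induct) auto

lemma le_triangle: "n \<le> triangle n"
  by (induction n) auto

definition prod_decode_sum :: "nat \<Rightarrow> nat" where
  "prod_decode_sum z = natrec 0 (\<lambda>i r. if triangle (Suc i) \<le> z then Suc r else r) z"

lemma prod_decode_sum_eq: "prod_decode_sum z = fst (prod_decode z) + snd (prod_decode z)"
proof -
  obtain a b where ab: "prod_decode z = (a, b)" by (cases "prod_decode z")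
  then have z: "z = triangle (a + b) + a" using prod_decode_inverse[of z] by (simp add: prod_encode_def)
  let ?s = "a + b"
  have *: "natrec 0 (\<lambda>i r. if triangle (Suc i) \<le> z then Suc r else r) i = min i ?s" for i
  proof (induction i)
    case 0 then show ?case by simp
  next
    case (Suc i)
    show ?case
    proof (cases "Suc i \<le> ?s")
      case True
      then have "triangle (Suc i) \<le> z" using triangle_mono[OF True] z by simp
      then show ?thesis using Suc True by simp
    next
      case False
      then have "triangle (Suc ?s) \<le> triangle (Suc i)" by (intro triangle_mono) simp
      then have "\<not> triangle (Suc i) \<le> z" using z by simp
      then show ?thesis using Suc False by simp
    qed
  qed
  have "?s \<le> z" using le_triangle[of ?s] z by simp
  then show ?thesis unfolding prod_decode_sum_def using * ab by simp
qed

lemma fst_prod_decode_eq: "fst (prod_decode z) = z - triangle (prod_decode_sum z)"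
proof -
  obtain a b where ab: "prod_decode z = (a, b)" by (cases "prod_decode z")
  then have z: "z = triangle (a + b) + a" using prod_decode_inverse[of z] by (simp add: prod_encode_def)
  then show ?thesis using ab prod_decode_sum_eq[of z] by simp
qed

lemma snd_prod_decode_eq: "snd (prod_decode z) = prod_decode_sum z - (z - triangle (prod_decode_sum z))"
proof -
  obtain a b where ab: "prod_decode z = (a, b)" by (cases "prod_decode z")
  then have z: "z = triangle (a + b) + a" using prod_decode_inverse[of z] by (simp add: prod_encode_def)
  then show ?thesis using ab prod_decode_sum_eq[of z] by simp
qed

lemma rec_fn_prod_decode_sum1: "rec_fn 1 (\<lambda>ys. prod_decode_sum (ys!0))"
  unfolding prod_decode_sum_def by (rule rec_intros | simp)+

lemma rec_fn_prod_decode_sum[rec_intros]: "rec_fn k a \<Longrightarrow> rec_fn k (\<lambda>xs. prod_decode_sum (a xs))"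
  by (rule rec_fn_comp1[OF rec_fn_prod_decode_sum1])

lemma rec_fn_fst_prod_decode1: "rec_fn 1 (\<lambda>ys. fst (prod_decode (ys!0)))"
  unfolding fst_prod_decode_eq by (rule rec_intros | simp)+

lemma rec_fn_fst_prod_decode[rec_intros]: "rec_fn k a \<Longrightarrow> rec_fn k (\<lambda>xs. fst (prod_decode (a xs)))"
  by (rule rec_fn_comp1[OF rec_fn_fst_prod_decode1])

lemma rec_fn_snd_prod_decode1: "rec_fn 1 (\<lambda>ys. snd (prod_decode (ys!0)))"
  unfolding snd_prod_decode_eq by (rule rec_intros | simp)+

lemma rec_fn_snd_prod_decode[rec_intros]: "rec_fn k a \<Longrightarrow> rec_fn k (\<lambda>xs. snd (prod_decode (a xs)))"
  by (rule rec_fn_comp1[OF rec_fn_snd_prod_decode1])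

section \<open>Lists coded as numbers\<close>

definition code_Cons :: "nat \<Rightarrow> nat \<Rightarrow> nat" where "code_Cons a c = Suc (prod_encode (a, c))"
definition code_hd :: "nat \<Rightarrow> nat" where "code_hd c = fst (prod_decode (c - 1))"
definition code_tl :: "nat \<Rightarrow> nat" where "code_tl c = snd (prod_decode (c - 1))"

lemma code_hd_Suc[simp]: "code_hd (Suc (prod_encode (a, c))) = a"
  by (simp add: code_hd_def)
lemma code_tl_Suc[simp]: "code_tl (Suc (prod_encode (a, c))) = c"
  by (simp add: code_tl_def)
lemma code_Cons_list_encode: "code_Cons a (list_encode xs) = list_encode (a # xs)"
  by (simp add: code_Cons_def)
lemma code_hd_list_encode[simp]: "code_hd (list_encode (a # xs)) = a"
  by (simp add: code_hd_def)
lemma code_tl_list_encode[simp]: "code_tl (list_encode (a # xs)) = list_encode xs"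
  by (simp add: code_tl_def)

lemma rec_fn_code_Cons[rec_intros]: "rec_fn k a \<Longrightarrow> rec_fn k b \<Longrightarrow> rec_fn k (\<lambda>xs. code_Cons (a xs) (b xs))"
  unfolding code_Cons_def by (rule rec_intros | assumption)+
lemma rec_fn_code_hd[rec_intros]: "rec_fn k a \<Longrightarrow> rec_fn k (\<lambda>xs. code_hd (a xs))"
  unfolding code_hd_def by (rule rec_intros | assumption)+
lemma rec_fn_code_tl[rec_intros]: "rec_fn k a \<Longrightarrow> rec_fn k (\<lambda>xs. code_tl (a xs))"
  unfolding code_tl_def by (rule rec_intros | assumption)+

lemma length_list_decode: "length (list_decode c) \<le> c"
proof (induction c rule: list_decode.induct)
  case 1 then show ?case by simp
next
  case (2 n)
  obtain x y where xy: "prod_decode n = (x, y)" by (cases "prod_decode n")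
  have "y \<le> n" using le_prod_encode_2[of y x] prod_decode_inverse[of n] xy by simp
  then show ?case using 2[OF xy[symmetric]] xy by simp
qed

definition code_foldl :: "(nat \<Rightarrow> nat \<Rightarrow> nat) \<Rightarrow> nat \<Rightarrow> nat \<Rightarrow> nat" where
  "code_foldl f acc c = foldl (\<lambda>r a. f a r) acc (list_decode c)"

lemma code_foldl_Nil[simp]: "code_foldl f acc (list_encode []) = acc"
  by (simp add: code_foldl_def)
lemma code_foldl_0[simp]: "code_foldl f acc 0 = acc"
  by (simp add: code_foldl_def)
lemma code_foldl_Cons[simp]: "code_foldl f acc (list_encode (a # xs)) = code_foldl f (f a acc) (list_encode xs)"
  by (simp add: code_foldl_def del: list_encode.simps)

text \<open>A fold over a coded list runs as primitive recursion on pairs (rest of the list, accumulator);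
  \<open>c\<close> steps suffice because \<open>length (list_decode c) \<le> c\<close>.\<close>

definition code_foldl_step :: "(nat \<Rightarrow> nat \<Rightarrow> nat) \<Rightarrow> nat \<Rightarrow> nat" where
  "code_foldl_step f s = (if fst (prod_decode s) = 0 then s
     else prod_encode (code_tl (fst (prod_decode s)), f (code_hd (fst (prod_decode s))) (snd (prod_decode s))))"

lemma code_foldl_step_funpow: "(code_foldl_step f ^^ i) (prod_encode (list_encode xs, acc))
   = prod_encode (list_encode (drop i xs), foldl (\<lambda>r a. f a r) acc (take i xs))"
proof (induction i arbitrary: xs acc)
  case 0 then show ?case by simp
next
  case (Suc i)
  show ?case
  proof (cases xs)
    case Nil
    have "(code_foldl_step f ^^ j) (prod_encode (0, acc)) = prod_encode (0, acc)" for j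
      by (induction j) (auto simp: code_foldl_step_def)
    moreover have "code_foldl_step f (prod_encode (0, acc)) = prod_encode (0, acc)" by (simp add: code_foldl_step_def)
    ultimately show ?thesis using Nil by (simp only: funpow_Suc_right o_apply) simp
  next
    case (Cons a xs')
    have "code_foldl_step f (prod_encode (list_encode xs, acc)) = prod_encode (list_encode xs', f a acc)"
      using Cons by (simp add: code_foldl_step_def del: list_encode.simps) (simp)
    then show ?thesis using Suc.IH Cons by (simp only: funpow_Suc_right o_apply) simp
  qed
qed

lemma code_foldl_natrec: "code_foldl f acc c = snd (prod_decode (natrec (prod_encode (c, acc)) (\<lambda>n s. code_foldl_step f s) c))"
proof -
  have "natrec (prod_encode (c, acc)) (\<lambda>n s. code_foldl_step f s) c = (code_foldl_step f ^^ c) (prod_encode (list_encode (list_decode c), acc))"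
    by (simp add: natrec_funpow)
  also have "\<dots> = prod_encode (list_encode (drop c (list_decode c)), foldl (\<lambda>r a. f a r) acc (take c (list_decode c)))"
    by (rule code_foldl_step_funpow)
  finally show ?thesis using length_list_decode[of c] by (simp add: code_foldl_def)
qed

lemma map_nth_drop: "map ((!) ys) [j..<length ys] = drop j ys"
  by (rule nth_equalityI) auto

lemma rec_fn_subst2:
  assumes "rec_fn (Suc (Suc k)) (\<lambda>ys. f (ys!0) (ys!1) (drop 2 ys))" "rec_fn (Suc (Suc k)) g0" "rec_fn (Suc (Suc k)) g1"
  shows "rec_fn (Suc (Suc k)) (\<lambda>ys. f (g0 ys) (g1 ys) (drop 2 ys))"
proof -
  let ?gs = "g0 # g1 # map (\<lambda>i ys. ys ! i) [2..<Suc (Suc k)]"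
  have l: "length ?gs = Suc (Suc k)" by (simp del: upt_Suc)
  have "rec_fn (Suc (Suc k)) (\<lambda>ys. (\<lambda>zs. f (zs!0) (zs!1) (drop 2 zs)) (map (\<lambda>g. g ys) ?gs))"
    by (rule rec_fn_comp) (simp only: l assms(1), use assms(2,3) rec_fn_proj in auto)
  then show ?thesis
  proof (rule rec_fn_cong)
    fix ys :: "nat list" assume l: "length ys = Suc (Suc k)"
    have "map (\<lambda>g. g ys) (map (\<lambda>i ys. ys ! i) [2..<Suc (Suc k)]) = drop 2 ys"
      using map_nth_drop[of ys 2] l by (simp add: comp_def del: upt_Suc)
    then show "(\<lambda>zs. f (zs!0) (zs!1) (drop 2 zs)) (map (\<lambda>g. g ys) ?gs) = f (g0 ys) (g1 ys) (drop 2 ys)"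
      by simp
  qed
qed

lemma rec_fn_code_foldl[rec_intros]:
  assumes "rec_fn k acc" "rec_fn (Suc (Suc k)) (\<lambda>ys. f (ys!0) (ys!1) (drop 2 ys))" "rec_fn k c"
  shows "rec_fn k (\<lambda>xs. code_foldl (\<lambda>a r. f a r xs) (acc xs) (c xs))"
  unfolding code_foldl_natrec code_foldl_step_def
  by (rule rec_intros assms rec_fn_subst2[OF assms(2)] | simp)+

definition code_all :: "(nat \<Rightarrow> bool) \<Rightarrow> nat \<Rightarrow> bool" where
  "code_all P c \<longleftrightarrow> (\<forall>a\<in>set (list_decode c). P a)"

lemma foldl_all_flag: "foldl (\<lambda>r a. if r = 1 \<and> P a then 1 else 0) (if b then 1 else 0) xs = (if b \<and> (\<forall>a\<in>set xs. P a) then 1 else (0::nat))"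
  by (induction xs arbitrary: b) auto

lemma code_foldl_code_all: "code_foldl (\<lambda>a r. if r = 1 \<and> P a then 1 else 0) 1 c = (if code_all P c then 1 else 0)"
  unfolding code_foldl_def code_all_def using foldl_all_flag[of P True] by simp

lemma rec_pred_code_all[rec_intros]:
  assumes "rec_pred (Suc (Suc k)) (\<lambda>ys. P (ys!0) (drop 2 ys))" "rec_fn k c"
  shows "rec_pred k (\<lambda>xs. code_all (\<lambda>a. P a xs) (c xs))"
  unfolding rec_pred_def
  apply (rule rec_fn_cong[of _ "\<lambda>xs. code_foldl (\<lambda>a r. if r = 1 \<and> P a xs then 1 else 0) 1 (c xs)"])
  subgoal by (rule rec_intros assms | simp)+
  by (simp only: code_foldl_code_all)

definition code_length :: "nat \<Rightarrow> nat" where "code_length c = code_foldl (\<lambda>a r. Suc r) 0 c"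
lemma code_length_list_encode[simp]: "code_length (list_encode xs) = length xs"
proof -
  have "code_foldl (\<lambda>a r. Suc r) n (list_encode xs) = n + length xs" for n
    by (induction xs arbitrary: n) (simp_all del: list_encode.simps)
  then show ?thesis by (simp add: code_length_def)
qed
lemma rec_fn_code_length[rec_intros]: "rec_fn k a \<Longrightarrow> rec_fn k (\<lambda>xs. code_length (a xs))"
  unfolding code_length_def by (rule rec_intros | simp)+

definition code_nth :: "nat \<Rightarrow> nat \<Rightarrow> nat" where "code_nth c i = code_hd (natrec c (\<lambda>n r. code_tl r) i)"
lemma code_nth_list_encode[simp]: "i < length xs \<Longrightarrow> code_nth (list_encode xs) i = xs ! i"
proof -
  have "natrec (list_encode xs) (\<lambda>n r. code_tl r) i = list_encode (drop i xs)" if "i \<le> length xs" for i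
    using that
  proof (induction i)
    case 0 then show ?case by simp
  next
    case (Suc i)
    then obtain a ys where "drop i xs = a # ys" by (cases "drop i xs") auto
    moreover then have "drop (Suc i) xs = ys" by (metis drop_Suc drop_tl list.sel(3))
    ultimately show ?case using Suc by simp
  qed
  moreover assume "i < length xs"
  ultimately show ?thesis unfolding code_nth_def by (simp add: Cons_nth_drop_Suc[symmetric])
qed
lemma rec_fn_code_nth[rec_intros]: "rec_fn k a \<Longrightarrow> rec_fn k b \<Longrightarrow> rec_fn k (\<lambda>xs. code_nth (a xs) (b xs))"
  unfolding code_nth_def by (rule rec_intros | simp)+

lemma code_Cons3: "code_Cons a (code_Cons b (code_Cons c 0)) = list_encode [a, b, c]" by (simp add: code_Cons_def)
lemma code_Cons7: "code_Cons a (code_Cons b (code_Cons c (code_Cons d (code_Cons e (code_Cons f (code_Cons g 0)))))) = list_encode [a, b, c, d, e, f, g]"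
  by (simp add: code_Cons_def)

lemma length_4_conv: "length L = 4 \<Longrightarrow> L = [L!0, L!1, L!2, L!3]"
  by (simp add: length_Suc_conv eval_nat_numeral) (auto)

section \<open>Gaussian rationals coded as numbers\<close>

text \<open>\<open>gcode a b c d e\<close> represents \<open>((a - b) + (c - d) \<i>) / (e + 1)\<close>: signs live in differences and
  the denominator is positive, so all operations on these codes stay in \<open>nat\<close>.\<close>

definition gcode :: "nat \<Rightarrow> nat \<Rightarrow> nat \<Rightarrow> nat \<Rightarrow> nat \<Rightarrow> nat" where
  "gcode a b c d e = prod_encode (a, prod_encode (b, prod_encode (c, prod_encode (d, e))))"
definition gc1 :: "nat \<Rightarrow> nat" where "gc1 z = fst (prod_decode z)"
definition gc2 :: "nat \<Rightarrow> nat" where "gc2 z = fst (prod_decode (snd (prod_decode z)))"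
definition gc3 :: "nat \<Rightarrow> nat" where "gc3 z = fst (prod_decode (snd (prod_decode (snd (prod_decode z)))))"
definition gc4 :: "nat \<Rightarrow> nat" where "gc4 z = fst (prod_decode (snd (prod_decode (snd (prod_decode (snd (prod_decode z)))))))"
definition gc5 :: "nat \<Rightarrow> nat" where "gc5 z = snd (prod_decode (snd (prod_decode (snd (prod_decode (snd (prod_decode z)))))))"

lemma gc_gcode[simp]: "gc1 (gcode a b c d e) = a" "gc2 (gcode a b c d e) = b" "gc3 (gcode a b c d e) = c"
  "gc4 (gcode a b c d e) = d" "gc5 (gcode a b c d e) = e"
  by (simp_all add: gcode_def gc1_def gc2_def gc3_def gc4_def gc5_def)

lemma rec_fn_gcode[rec_intros]:
  "rec_fn k a \<Longrightarrow> rec_fn k b \<Longrightarrow> rec_fn k c \<Longrightarrow> rec_fn k d \<Longrightarrow> rec_fn k e \<Longrightarrow>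
   rec_fn k (\<lambda>xs. gcode (a xs) (b xs) (c xs) (d xs) (e xs))"
  unfolding gcode_def by (rule rec_intros | assumption)+
lemma rec_fn_gc1[rec_intros]: "rec_fn k a \<Longrightarrow> rec_fn k (\<lambda>xs. gc1 (a xs))" unfolding gc1_def by (rule rec_intros | assumption)+
lemma rec_fn_gc2[rec_intros]: "rec_fn k a \<Longrightarrow> rec_fn k (\<lambda>xs. gc2 (a xs))" unfolding gc2_def by (rule rec_intros | assumption)+
lemma rec_fn_gc3[rec_intros]: "rec_fn k a \<Longrightarrow> rec_fn k (\<lambda>xs. gc3 (a xs))" unfolding gc3_def by (rule rec_intros | assumption)+
lemma rec_fn_gc4[rec_intros]: "rec_fn k a \<Longrightarrow> rec_fn k (\<lambda>xs. gc4 (a xs))" unfolding gc4_def by (rule rec_intros | assumption)+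
lemma rec_fn_gc5[rec_intros]: "rec_fn k a \<Longrightarrow> rec_fn k (\<lambda>xs. gc5 (a xs))" unfolding gc5_def by (rule rec_intros | assumption)+

definition gval :: "nat \<Rightarrow> complex" where
  "gval z = Complex ((real (gc1 z) - real (gc2 z)) / (real (gc5 z) + 1)) ((real (gc3 z) - real (gc4 z)) / (real (gc5 z) + 1))"

lemma Re_gval: "Re (gval z) = (real (gc1 z) - real (gc2 z)) / (real (gc5 z) + 1)" by (simp add: gval_def)
lemma Im_gval: "Im (gval z) = (real (gc3 z) - real (gc4 z)) / (real (gc5 z) + 1)" by (simp add: gval_def)

lemma gval_Rats: "Re (gval z) \<in> \<rat>" "Im (gval z) \<in> \<rat>"
  unfolding Re_gval Im_gval by (simp_all add: Rats_divide Rats_diff Rats_add)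

lemma gval_0[simp]: "gval 0 = 0"
proof -
  have "(0::nat) = gcode 0 0 0 0 0" by (simp add: gcode_def prod_encode_def)
  then show ?thesis by (metis gval_def gc_gcode of_nat_0 diff_self div_0 Complex_eq_0)
qed

lemma real_denom_mult: "real (e + e' + e * e') + 1 = (real e + 1) * (real e' + 1)"
  by (simp add: algebra_simps)

lemma real_Suc_nonzero: "real n + 1 \<noteq> 0" by (simp add: add_nonneg_eq_0_iff)
lemma real_Suc_nonzero': "1 + real n \<noteq> 0" by (simp add: add_nonneg_eq_0_iff)

definition gadd :: "nat \<Rightarrow> nat \<Rightarrow> nat" where
  "gadd z w = gcode (gc1 z * Suc (gc5 w) + gc1 w * Suc (gc5 z)) (gc2 z * Suc (gc5 w) + gc2 w * Suc (gc5 z))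
                 (gc3 z * Suc (gc5 w) + gc3 w * Suc (gc5 z)) (gc4 z * Suc (gc5 w) + gc4 w * Suc (gc5 z))
                 (gc5 z + gc5 w + gc5 z * gc5 w)"

lemma gval_gadd: "gval (gadd z w) = gval z + gval w"
  unfolding gadd_def
  apply (simp only: complex_eq_iff Re_gval Im_gval gc_gcode real_denom_mult plus_complex.sel times_complex.sel)
  apply (simp add: field_simps real_Suc_nonzero real_Suc_nonzero')
  done

definition gmult :: "nat \<Rightarrow> nat \<Rightarrow> nat" where
  "gmult z w = gcode (gc1 z * gc1 w + gc2 z * gc2 w + gc3 z * gc4 w + gc4 z * gc3 w)
                 (gc1 z * gc2 w + gc2 z * gc1 w + gc3 z * gc3 w + gc4 z * gc4 w)
                 (gc1 z * gc3 w + gc2 z * gc4 w + gc3 z * gc1 w + gc4 z * gc2 w)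
                 (gc1 z * gc4 w + gc2 z * gc3 w + gc3 z * gc2 w + gc4 z * gc1 w)
                 (gc5 z + gc5 w + gc5 z * gc5 w)"

lemma frac_mult_diff_eq:
  fixes e e' :: real assumes "e \<ge> 0" "e' \<ge> 0"
  shows "((a1-b1)/(e+1))*((a2-b2)/(e'+1)) - ((c1-d1)/(e+1))*((c2-d2)/(e'+1))
     = ((a1*a2 + b1*b2 + c1*d2 + d1*c2) - (a1*b2 + b1*a2 + c1*c2 + d1*d2)) / ((e + e' + e*e') + 1)"
proof -
  have nz: "e + 1 \<noteq> 0" "e' + 1 \<noteq> 0" using assms by linarith+
  have eq: "(e + e' + e*e') + 1 = (e+1)*(e'+1)" by (simp add: algebra_simps)
  show ?thesis unfolding eq times_divide_times_eq diff_divide_distrib[symmetric] add_divide_distrib[symmetric]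
    by (simp add: algebra_simps)
qed

lemma frac_mult_add_eq:
  fixes e e' :: real assumes "e \<ge> 0" "e' \<ge> 0"
  shows "((a1-b1)/(e+1))*((c2-d2)/(e'+1)) + ((c1-d1)/(e+1))*((a2-b2)/(e'+1))
     = ((a1*c2 + b1*d2 + c1*a2 + d1*b2) - (a1*d2 + b1*c2 + c1*b2 + d1*a2)) / ((e + e' + e*e') + 1)"
proof -
  have nz: "e + 1 \<noteq> 0" "e' + 1 \<noteq> 0" using assms by linarith+
  have eq: "(e + e' + e*e') + 1 = (e+1)*(e'+1)" by (simp add: algebra_simps)
  show ?thesis unfolding eq times_divide_times_eq diff_divide_distrib[symmetric] add_divide_distrib[symmetric]
    by (simp add: algebra_simps)
qed

lemma gval_gmult: "gval (gmult z w) = gval z * gval w"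
  unfolding gmult_def
  apply (simp only: complex_eq_iff Re_gval Im_gval gc_gcode times_complex.sel)
  apply (simp only: of_nat_add of_nat_mult frac_mult_diff_eq[OF of_nat_0_le_iff of_nat_0_le_iff]
                    frac_mult_add_eq[OF of_nat_0_le_iff of_nat_0_le_iff])
  done

definition gcnj :: "nat \<Rightarrow> nat" where "gcnj z = gcode (gc1 z) (gc2 z) (gc4 z) (gc3 z) (gc5 z)"
lemma gval_gcnj: "gval (gcnj z) = cnj (gval z)"
  unfolding gcnj_def by (simp add: complex_eq_iff Re_gval Im_gval) (simp add: field_simps)

definition guminus :: "nat \<Rightarrow> nat" where "guminus z = gcode (gc2 z) (gc1 z) (gc4 z) (gc3 z) (gc5 z)"
lemma gval_guminus: "gval (guminus z) = - gval z"
  unfolding guminus_def by (simp add: complex_eq_iff Re_gval Im_gval) (simp add: field_simps)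

definition gdiff :: "nat \<Rightarrow> nat \<Rightarrow> nat" where "gdiff z w = gadd z (guminus w)"
lemma gval_gdiff: "gval (gdiff z w) = gval z - gval w"
  unfolding gdiff_def by (simp add: gval_gadd gval_guminus)

lemma rec_fn_gadd[rec_intros]: "rec_fn k a \<Longrightarrow> rec_fn k b \<Longrightarrow> rec_fn k (\<lambda>xs. gadd (a xs) (b xs))"
  unfolding gadd_def by (rule rec_intros | assumption)+
lemma rec_fn_gmult[rec_intros]: "rec_fn k a \<Longrightarrow> rec_fn k b \<Longrightarrow> rec_fn k (\<lambda>xs. gmult (a xs) (b xs))"
  unfolding gmult_def by (rule rec_intros | assumption)+
lemma rec_fn_gcnj[rec_intros]: "rec_fn k a \<Longrightarrow> rec_fn k (\<lambda>xs. gcnj (a xs))"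
  unfolding gcnj_def by (rule rec_intros | assumption)+
lemma rec_fn_guminus[rec_intros]: "rec_fn k a \<Longrightarrow> rec_fn k (\<lambda>xs. guminus (a xs))"
  unfolding guminus_def by (rule rec_intros | assumption)+
lemma rec_fn_gdiff[rec_intros]: "rec_fn k a \<Longrightarrow> rec_fn k b \<Longrightarrow> rec_fn k (\<lambda>xs. gdiff (a xs) (b xs))"
  unfolding gdiff_def by (rule rec_intros | assumption)+

text \<open>Norm comparisons with denominators cleared and \<open>(a - b)\<^sup>2 = a\<^sup>2 + b\<^sup>2 - 2ab\<close> rearranged so that
  no subtraction occurs.\<close>

definition gnorm_less :: "nat \<Rightarrow> nat \<Rightarrow> bool" where
  "gnorm_less z k \<longleftrightarrow> k * k * (gc1 z * gc1 z + gc2 z * gc2 z + gc3 z * gc3 z + gc4 z * gc4 z)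
      < Suc (gc5 z) * Suc (gc5 z) + k * k * (2 * gc1 z * gc2 z + 2 * gc3 z * gc4 z)"

definition gnorm_le1 :: "nat \<Rightarrow> bool" where
  "gnorm_le1 z \<longleftrightarrow> gc1 z * gc1 z + gc2 z * gc2 z + gc3 z * gc3 z + gc4 z * gc4 z
      \<le> Suc (gc5 z) * Suc (gc5 z) + (2 * gc1 z * gc2 z + 2 * gc3 z * gc4 z)"

definition gnear_nonneg :: "nat \<Rightarrow> nat \<Rightarrow> bool" where
  "gnear_nonneg z k \<longleftrightarrow> (if gc2 z \<le> gc1 z then k * k * (gc3 z * gc3 z + gc4 z * gc4 z)
      < Suc (gc5 z) * Suc (gc5 z) + k * k * (2 * gc3 z * gc4 z) else gnorm_less z k)"

lemma rec_pred_gnorm_less[rec_intros]: "rec_fn j a \<Longrightarrow> rec_fn j b \<Longrightarrow> rec_pred j (\<lambda>xs. gnorm_less (a xs) (b xs))"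
  unfolding gnorm_less_def by (rule rec_intros | assumption)+
lemma rec_pred_gnorm_le1[rec_intros]: "rec_fn j a \<Longrightarrow> rec_pred j (\<lambda>xs. gnorm_le1 (a xs))"
  unfolding gnorm_le1_def by (rule rec_intros | assumption)+
lemma rec_pred_gnear_nonneg[rec_intros]: "rec_fn j a \<Longrightarrow> rec_fn j b \<Longrightarrow> rec_pred j (\<lambda>xs. gnear_nonneg (a xs) (b xs))"
  unfolding gnear_nonneg_def by (rule rec_intros | assumption)+

lemma cmod_lt_iff: "r > 0 \<Longrightarrow> cmod w < r \<longleftrightarrow> (Re w)\<^sup>2 + (Im w)\<^sup>2 < r\<^sup>2"
  by (smt (verit) norm_complex_def real_sqrt_less_iff real_sqrt_unique)

lemma cmod_le_1_iff: "cmod w \<le> 1 \<longleftrightarrow> (Re w)\<^sup>2 + (Im w)\<^sup>2 \<le> 1"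
  unfolding cmod_def by simp

text \<open>The point of \<open>[0, \<infinity>)\<close> nearest to \<open>w\<close> is \<open>Re w\<close> if \<open>Re w \<ge> 0\<close> and \<open>0\<close> otherwise.\<close>

lemma ex_nonneg_real_near_iff: "r > 0 \<Longrightarrow> (\<exists>t\<ge>0. cmod (w - of_real t) < r) \<longleftrightarrow> (if Re w \<ge> 0 then \<bar>Im w\<bar> < r else cmod w < r)"
proof -
  assume r: "r > 0"
  show ?thesis
  proof (cases "Re w \<ge> 0")
    case True
    have "(\<exists>t\<ge>0. cmod (w - of_real t) < r) \<longleftrightarrow> \<bar>Im w\<bar> < r"
    proof
      assume "\<exists>t\<ge>0. cmod (w - of_real t) < r"
      then obtain t where "cmod (w - of_real t) < r" by blast
      moreover have "\<bar>Im (w - of_real t)\<bar> \<le> cmod (w - of_real t)" by (rule abs_Im_le_cmod)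
      ultimately show "\<bar>Im w\<bar> < r" by simp
    next
      assume a: "\<bar>Im w\<bar> < r"
      have "w - of_real (Re w) = \<i> * of_real (Im w)" by (simp add: complex_eq_iff)
      then have "cmod (w - of_real (Re w)) = \<bar>Im w\<bar>" by (simp add: norm_mult)
      then show "\<exists>t\<ge>0. cmod (w - of_real t) < r" using True a by (intro exI[of _ "Re w"]) simp
    qed
    then show ?thesis using True by simp
  next
    case False
    have "(\<exists>t\<ge>0. cmod (w - of_real t) < r) \<longleftrightarrow> cmod w < r"
    proof
      assume "\<exists>t\<ge>0. cmod (w - of_real t) < r"
      then obtain t where t: "t \<ge> 0" "cmod (w - of_real t) < r" by blast
      have "(Re w)\<^sup>2 \<le> (Re w - t)\<^sup>2" using False t(1)
        by (smt (verit, del_insts) real_sqrt_abs real_sqrt_less_iff)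
      then have "(Re w)\<^sup>2 + (Im w)\<^sup>2 \<le> (Re (w - of_real t))\<^sup>2 + (Im (w - of_real t))\<^sup>2" by simp
      then show "cmod w < r" using t(2) cmod_lt_iff[OF r] by (meson le_less_trans)
    next
      assume "cmod w < r" then show "\<exists>t\<ge>0. cmod (w - of_real t) < r" by (intro exI[of _ 0]) simp
    qed
    then show ?thesis using False by simp
  qed
qed

lemma gnorm_less_iff:
  assumes k: "1 \<le> k" shows "gnorm_less z k \<longleftrightarrow> cmod (gval z) < 1 / real k"
proof -
  define D where "D = real (gc5 z) + 1"
  define X where "X = real (gc1 z) - real (gc2 z)"
  define Y where "Y = real (gc3 z) - real (gc4 z)"
  have D: "D > 0" unfolding D_def by simp
  have kp: "real k > 0" using k by simp
  have "cmod (gval z) < 1 / real k \<longleftrightarrow> (X/D)\<^sup>2 + (Y/D)\<^sup>2 < (1 / real k)\<^sup>2"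
    using cmod_lt_iff[of "1 / real k" "gval z"] kp by (simp add: Re_gval Im_gval X_def Y_def D_def)
  also have "\<dots> \<longleftrightarrow> real k * real k * (X\<^sup>2 + Y\<^sup>2) < D * D"
    using D kp by (simp add: power_divide field_simps power2_eq_square)
  also have "\<dots> \<longleftrightarrow> gnorm_less z k"
  proof -
    have "real k * real k * (X\<^sup>2 + Y\<^sup>2) = real (k * k * (gc1 z * gc1 z + gc2 z * gc2 z + gc3 z * gc3 z + gc4 z * gc4 z))
            - real (k * k * (2 * gc1 z * gc2 z + 2 * gc3 z * gc4 z))"
      unfolding X_def Y_def by (simp add: power2_eq_square algebra_simps)
    moreover have "D * D = real (Suc (gc5 z) * Suc (gc5 z))" unfolding D_def by (simp add: algebra_simps)
    ultimately show ?thesis unfolding gnorm_less_def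
      by linarith
  qed
  finally show ?thesis ..
qed

lemma gnorm_le1_iff: "gnorm_le1 z \<longleftrightarrow> cmod (gval z) \<le> 1"
proof -
  define D where "D = real (gc5 z) + 1"
  define X where "X = real (gc1 z) - real (gc2 z)"
  define Y where "Y = real (gc3 z) - real (gc4 z)"
  have D: "D > 0" unfolding D_def by simp
  have "cmod (gval z) \<le> 1 \<longleftrightarrow> (X/D)\<^sup>2 + (Y/D)\<^sup>2 \<le> 1"
    using cmod_le_1_iff[of "gval z"] by (simp add: Re_gval Im_gval X_def Y_def D_def)
  also have "\<dots> \<longleftrightarrow> X\<^sup>2 + Y\<^sup>2 \<le> D * D"
    using D by (simp add: power_divide field_simps power2_eq_square)
  also have "\<dots> \<longleftrightarrow> gnorm_le1 z"
  proof -
    have "X\<^sup>2 + Y\<^sup>2 = real (gc1 z * gc1 z + gc2 z * gc2 z + gc3 z * gc3 z + gc4 z * gc4 z)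
            - real (2 * gc1 z * gc2 z + 2 * gc3 z * gc4 z)"
      unfolding X_def Y_def by (simp add: power2_eq_square algebra_simps)
    moreover have "D * D = real (Suc (gc5 z) * Suc (gc5 z))" unfolding D_def by (simp add: algebra_simps)
    ultimately show ?thesis unfolding gnorm_le1_def
      by linarith
  qed
  finally show ?thesis ..
qed

lemma gnear_nonneg_iff:
  assumes k: "1 \<le> k" shows "gnear_nonneg z k \<longleftrightarrow> (\<exists>t\<ge>0. cmod (gval z - of_real t) < 1 / real k)"
proof -
  have kp: "real k > 0" using k by simp
  have re: "Re (gval z) \<ge> 0 \<longleftrightarrow> gc2 z \<le> gc1 z"
    by (simp add: Re_gval divide_nonneg_pos add_pos_nonneg) (simp add: zero_le_divide_iff add_pos_nonneg less_le_not_le)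
  show ?thesis
  proof (cases "gc2 z \<le> gc1 z")
    case False
    then show ?thesis using re ex_nonneg_real_near_iff[of "1 / real k" "gval z"] kp gnorm_less_iff[OF k]
      by (simp add: gnear_nonneg_def)
  next
    case True
    define D where "D = real (gc5 z) + 1"
    define Y where "Y = real (gc3 z) - real (gc4 z)"
    have D: "D > 0" unfolding D_def by simp
    have "\<bar>Im (gval z)\<bar> < 1 / real k \<longleftrightarrow> (Y/D)\<^sup>2 < (1 / real k)\<^sup>2"
      unfolding Im_gval Y_def[symmetric] D_def[symmetric]
      using kp by (metis abs_of_pos real_sqrt_abs real_sqrt_less_iff divide_pos_pos zero_less_one)
    also have "\<dots> \<longleftrightarrow> real k * real k * Y\<^sup>2 < D * D"
      using D kp by (simp add: power_divide field_simps power2_eq_square)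
    also have "\<dots> \<longleftrightarrow> k * k * (gc3 z * gc3 z + gc4 z * gc4 z) < Suc (gc5 z) * Suc (gc5 z) + k * k * (2 * gc3 z * gc4 z)"
    proof -
      have "real k * real k * Y\<^sup>2 = real (k * k * (gc3 z * gc3 z + gc4 z * gc4 z)) - real (k * k * (2 * gc3 z * gc4 z))"
        unfolding Y_def by (simp add: power2_eq_square algebra_simps)
      moreover have "D * D = real (Suc (gc5 z) * Suc (gc5 z))" unfolding D_def by (simp add: algebra_simps)
      ultimately show ?thesis
        by linarith
    qed
    finally show ?thesis using True re ex_nonneg_real_near_iff[of "1 / real k" "gval z"] kp
      by (simp add: gnear_nonneg_def)
  qed
qed

text \<open>\<open>int_encode\<close> maps \<open>a \<ge> 0\<close> to \<open>2a\<close> and \<open>a < 0\<close> to \<open>-2a - 1\<close>; the two functions below recover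
  the positive and the negative part.\<close>

definition int_code_pos :: "nat \<Rightarrow> nat" where "int_code_pos u = (if u mod 2 = 0 then u div 2 else 0)"
definition int_code_neg :: "nat \<Rightarrow> nat" where "int_code_neg u = (if u mod 2 = 0 then 0 else u div 2 + 1)"

lemma rec_fn_int_code_pos[rec_intros]: "rec_fn k a \<Longrightarrow> rec_fn k (\<lambda>xs. int_code_pos (a xs))" unfolding int_code_pos_def by (rule rec_intros | assumption)+
lemma rec_fn_int_code_neg[rec_intros]: "rec_fn k a \<Longrightarrow> rec_fn k (\<lambda>xs. int_code_neg (a xs))" unfolding int_code_neg_def by (rule rec_intros | assumption)+

lemma int_code_pos_neg: "real (int_code_pos (int_encode a)) - real (int_code_neg (int_encode a)) = real_of_int a"
  by (cases "a \<ge> 0") (auto simp: int_encode_def sum_encode_def int_code_pos_def int_code_neg_def)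

lemma int_encode_pos_div2: "b > 0 \<Longrightarrow> int_encode b div 2 = nat b"
  by (simp add: int_encode_def sum_encode_def)

lemma of_rat_quotient_of: "quotient_of q = (a, b) \<Longrightarrow> (of_rat q :: real) = real_of_int a / real_of_int b"
  using quotient_of_div[of q a b] by (simp add: of_rat_divide)

definition gcode_of_rat :: "nat \<Rightarrow> nat" where
  "gcode_of_rat r = gcode (int_code_pos (fst (prod_decode r))) (int_code_neg (fst (prod_decode r))) 0 0 (snd (prod_decode r) div 2 - 1)"

lemma rec_fn_gcode_of_rat[rec_intros]: "rec_fn k a \<Longrightarrow> rec_fn k (\<lambda>xs. gcode_of_rat (a xs))" unfolding gcode_of_rat_def by (rule rec_intros | assumption)+

lemma gval_gcode_of_rat: "gval (gcode_of_rat (rat_code q)) = complex_of_real (of_rat q)"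
proof -
  obtain a b where ab: "quotient_of q = (a, b)" by (cases "quotient_of q")
  have b: "b > 0" using quotient_of_denom_pos[OF ab] .
  have "real (nat b - 1) + 1 = real_of_int b" using b by (simp add: of_nat_diff)
  then show ?thesis
    using ab b int_code_pos_neg[of a]
    by (simp add: gcode_of_rat_def rat_code_def gval_def int_encode_pos_div2 of_rat_quotient_of complex_eq_iff)
qed

definition gcode_of_gq :: "nat \<Rightarrow> nat" where
  "gcode_of_gq g = gcode (int_code_pos (fst (prod_decode (fst (prod_decode g)))) * (snd (prod_decode (snd (prod_decode g))) div 2))
                 (int_code_neg (fst (prod_decode (fst (prod_decode g)))) * (snd (prod_decode (snd (prod_decode g))) div 2))
                 (int_code_pos (fst (prod_decode (snd (prod_decode g)))) * (snd (prod_decode (fst (prod_decode g))) div 2))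
                 (int_code_neg (fst (prod_decode (snd (prod_decode g)))) * (snd (prod_decode (fst (prod_decode g))) div 2))
                 ((snd (prod_decode (fst (prod_decode g))) div 2) * (snd (prod_decode (snd (prod_decode g))) div 2) - 1)"

lemma rec_fn_gcode_of_gq[rec_intros]: "rec_fn k a \<Longrightarrow> rec_fn k (\<lambda>xs. gcode_of_gq (a xs))" unfolding gcode_of_gq_def by (rule rec_intros | assumption)+

lemma gval_gcode_of_gq: "gval (gcode_of_gq (gq_code c)) = gq_val c"
proof -
  obtain a1 b1 where ab1: "quotient_of (fst c) = (a1, b1)" by (cases "quotient_of (fst c)")
  obtain a2 b2 where ab2: "quotient_of (snd c) = (a2, b2)" by (cases "quotient_of (snd c)")
  have b1: "b1 > 0" using quotient_of_denom_pos[OF ab1] .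
  have b2: "b2 > 0" using quotient_of_denom_pos[OF ab2] .
  have d: "real (nat b1 * nat b2 - 1) + 1 = real_of_int b1 * real_of_int b2"
  proof -
    have "nat b1 * nat b2 \<ge> 1" using b1 b2 by (simp add: Suc_le_eq)
    then have "real (nat b1 * nat b2 - 1) = real (nat b1 * nat b2) - 1" by (simp add: of_nat_diff)
    then show ?thesis using b1 b2 by simp
  qed
  have e1: "real (int_code_pos (int_encode a1)) * real_of_int b2 - real (int_code_neg (int_encode a1)) * real_of_int b2 = real_of_int a1 * real_of_int b2"
    using int_code_pos_neg[of a1] by (simp add: left_diff_distrib[symmetric])
  have e2: "real (int_code_pos (int_encode a2)) * real_of_int b1 - real (int_code_neg (int_encode a2)) * real_of_int b1 = real_of_int a2 * real_of_int b1"
    using int_code_pos_neg[of a2] by (simp add: left_diff_distrib[symmetric])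
  have d': "real (nat b1 * nat b2 - Suc 0) + 1 = real_of_int b1 * real_of_int b2" using d by simp
  show ?thesis
    unfolding gcode_of_gq_def gq_code_def rat_code_def ab1 ab2 gq_val_def
    using b1 b2
    by (simp add: gval_def int_encode_pos_div2 d' e1 e2 complex_eq_iff of_rat_quotient_of[OF ab1] of_rat_quotient_of[OF ab2])
qed

lemma gval_surj: "Re z \<in> \<rat> \<Longrightarrow> Im z \<in> \<rat> \<Longrightarrow> \<exists>c. gval c = z"
proof -
  assume "Re z \<in> \<rat>" "Im z \<in> \<rat>"
  then obtain r1 r2 where "Re z = of_rat r1" "Im z = of_rat r2" by (auto elim!: Rats_cases)
  then have "gval (gcode_of_gq (gq_code (r1, r2))) = z" by (simp add: gval_gcode_of_gq gq_val_def complex_eq_iff)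
  then show ?thesis ..
qed

lemma gval_code_foldl_sum:
  assumes "\<And>e r. gval (F e r) = gval r + g e"
  shows "gval (code_foldl F r0 (list_encode es)) = gval r0 + sum_list (map g es)"
proof (induction es arbitrary: r0)
  case Nil then show ?case by simp
next
  case (Cons e es)
  have "code_foldl F r0 (list_encode (e # es)) = code_foldl F (F e r0) (list_encode es)"
    by (simp only: code_foldl_Cons)
  then show ?case using Cons[of "F e r0"] assms by (simp add: algebra_simps)
qed

section \<open>Words of the free product\<close>

definition letter_ok :: "nat \<Rightarrow> nat \<Rightarrow> nat \<times> nat \<Rightarrow> bool" where
  "letter_ok n m x \<longleftrightarrow> 1 \<le> fst x \<and> fst x \<le> n \<and> 0 < snd x \<and> snd x < m"

lemma fp_carrier_iff:
  "w \<in> fp_carrier n m \<longleftrightarrow> (\<forall>x\<in>set w. letter_ok n m x) \<and> successively (\<lambda>a b. fst a \<noteq> fst b) w"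
  by (auto simp: fp_carrier_def letter_ok_def successively_conv_nth)

lemma fp_carrier_Nil[simp]: "[] \<in> fp_carrier n m"
  by (simp add: fp_carrier_iff)

lemma fp_carrier_Cons:
  "x # w \<in> fp_carrier n m \<longleftrightarrow> letter_ok n m x \<and> w \<in> fp_carrier n m \<and> (w = [] \<or> fst x \<noteq> fst (hd w))"
  by (auto simp: fp_carrier_iff successively_Cons)

lemma fp_push_carrier:
  assumes "letter_ok n m (v, e)" "w \<in> fp_carrier n m"
  shows "fp_push m (v, e) w \<in> fp_carrier n m"
proof (cases w)
  case (Cons x ws)
  have "letter_ok n m (v, (e + snd x) mod m)" if "(e + snd x) mod m \<noteq> 0"
    using assms(1) that by (simp add: letter_ok_def)
  then show ?thesis using assms Cons by (cases x) (auto simp: fp_carrier_Cons)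
qed (use assms in \<open>simp add: fp_carrier_Cons\<close>)

lemma fp_mult_carrier:
  assumes "x \<in> fp_carrier n m" "y \<in> fp_carrier n m"
  shows "fp_mult m x y \<in> fp_carrier n m"
proof -
  have "\<forall>a\<in>set xs. letter_ok n m a \<Longrightarrow> foldr (fp_push m) xs y \<in> fp_carrier n m" for xs
    using assms(2) fp_push_carrier by (induction xs) (auto simp: case_prod_beta)
  then show ?thesis using assms(1) fp_carrier_iff unfolding fp_mult_def by blast
qed

lemma fp_inv_carrier: "x \<in> fp_carrier n m \<Longrightarrow> fp_inv m x \<in> fp_carrier n m"
  by (auto simp: fp_inv_def fp_carrier_iff letter_ok_def successively_map case_prod_beta
      elim!: successively_mono)
definition code_push :: "nat \<Rightarrow> nat \<Rightarrow> nat \<Rightarrow> nat" where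
  "code_push m a c = (if c = 0 then code_Cons a 0
     else if fst (prod_decode a) = fst (prod_decode (code_hd c))
       then (if (snd (prod_decode a) + snd (prod_decode (code_hd c))) mod m = 0 then code_tl c
             else code_Cons (prod_encode (fst (prod_decode a), (snd (prod_decode a) + snd (prod_decode (code_hd c))) mod m)) (code_tl c))
     else code_Cons a c)"

lemma rec_fn_code_push[rec_intros]: "rec_fn k m \<Longrightarrow> rec_fn k a \<Longrightarrow> rec_fn k c \<Longrightarrow> rec_fn k (\<lambda>xs. code_push (m xs) (a xs) (c xs))"
  unfolding code_push_def by (rule rec_intros | assumption)+

lemma word_code_Nil[simp]: "word_code [] = 0" by (simp add: word_code_def)
lemma word_code_Cons: "word_code (x # w) = code_Cons (prod_encode x) (word_code w)"
  by (simp add: word_code_def code_Cons_def)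

lemma code_push_word_code: "code_push m (prod_encode (v, e)) (word_code w) = word_code (fp_push m (v, e) w)"
proof (cases w)
  case Nil then show ?thesis by (simp add: code_push_def word_code_Cons code_Cons_def)
next
  case (Cons x ws)
  obtain w' f where x: "x = (w', f)" by (cases x)
  show ?thesis using Cons x by (simp add: code_push_def word_code_Cons code_Cons_def)
qed

definition code_rev :: "nat \<Rightarrow> nat" where "code_rev c = code_foldl (\<lambda>a r. code_Cons a r) 0 c"

lemma code_foldl_code_Cons: "code_foldl (\<lambda>a r. code_Cons a r) (list_encode acc) (list_encode xs) = list_encode (rev xs @ acc)"
  by (induction xs arbitrary: acc) (simp_all add: code_Cons_list_encode del: list_encode.simps)

lemma code_rev_list_encode: "code_rev (list_encode xs) = list_encode (rev xs)"
  using code_foldl_code_Cons[of "[]" xs] by (simp add: code_rev_def)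

lemma rec_fn_code_rev[rec_intros]: "rec_fn k a \<Longrightarrow> rec_fn k (\<lambda>xs. code_rev (a xs))"
  unfolding code_rev_def by (rule rec_intros | simp)+

definition code_mult :: "nat \<Rightarrow> nat \<Rightarrow> nat \<Rightarrow> nat" where
  "code_mult m x y = code_foldl (\<lambda>a r. code_push m a r) y (code_rev x)"

lemma rec_fn_code_mult3: "rec_fn 3 (\<lambda>ys. code_mult (ys!0) (ys!1) (ys!2))"
  unfolding code_mult_def by (rule rec_intros | simp)+

lemmas rec_fn_code_mult[rec_intros] = rec_fn_comp3[OF rec_fn_code_mult3]

lemma code_mult_word_code: "code_mult m (word_code x) (word_code y) = word_code (fp_mult m x y)"
proof -
  have "code_foldl (\<lambda>a r. code_push m a r) (word_code acc) (list_encode (map prod_encode zs))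
        = word_code (foldl (\<lambda>r a. fp_push m a r) acc zs)" for acc zs
  proof (induction zs arbitrary: acc)
    case Nil then show ?case by simp
  next
    case (Cons z zs)
    obtain v e where z: "z = (v, e)" by (cases z)
    show ?case using Cons z by (simp add: code_push_word_code del: list_encode.simps)
  qed
  then show ?thesis
    by (simp add: code_mult_def fp_mult_def word_code_def code_rev_list_encode rev_map foldr_conv_foldl)
qed

definition code_inv :: "nat \<Rightarrow> nat \<Rightarrow> nat" where
  "code_inv m c = code_foldl (\<lambda>a r. code_Cons (prod_encode (fst (prod_decode a), m - snd (prod_decode a))) r) 0 c"

lemma rec_fn_code_inv2: "rec_fn 2 (\<lambda>ys. code_inv (ys!0) (ys!1))"
  unfolding code_inv_def by (rule rec_intros | simp)+

lemmas rec_fn_code_inv[rec_intros] = rec_fn_comp2[OF rec_fn_code_inv2]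

lemma code_inv_word_code: "code_inv m (word_code x) = word_code (fp_inv m x)"
proof -
  have "code_foldl (\<lambda>a r. code_Cons (prod_encode (fst (prod_decode a), m - snd (prod_decode a))) r) (word_code acc) (list_encode (map prod_encode zs))
        = word_code (rev (map (\<lambda>(v, e). (v, m - e)) zs) @ acc)" for acc zs
  proof (induction zs arbitrary: acc)
    case Nil then show ?case by simp
  next
    case (Cons z zs)
    obtain v e where z: "z = (v, e)" by (cases z)
    show ?case using Cons[of "(v, m - e) # acc"] z by (simp add: word_code_Cons del: list_encode.simps)
  qed
  from this[of "[]"] show ?thesis by (simp add: code_inv_def fp_inv_def word_code_def)
qed

lemma word_code_inj: "word_code a = word_code b \<Longrightarrow> a = b"
  unfolding word_code_def by (simp add: list_encode_eq inj_map_eq_map[OF inj_prod_encode])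

lemma fgr_eval_Nil[simp]: "fgr_eval \<tau> [] = 0" by (simp add: fgr_eval_def)
lemma fgr_eval_Cons[simp]: "fgr_eval \<tau> ((a, g) # x) = a * \<tau> g + fgr_eval \<tau> x" by (simp add: fgr_eval_def)
lemma fgr_eval_append[simp]: "fgr_eval \<tau> (x @ y) = fgr_eval \<tau> x + fgr_eval \<tau> y" by (simp add: fgr_eval_def)
lemma fgr_eval_concat: "fgr_eval \<tau> (concat xs) = (\<Sum>x\<leftarrow>xs. fgr_eval \<tau> x)"
  by (induction xs) auto

lemma fgr_eval_cong: "(\<forall>g\<in>snd ` set x. \<tau>1 g = \<tau>2 g) \<Longrightarrow> fgr_eval \<tau>1 x = fgr_eval \<tau>2 x"
proof (induction x)
  case Nil then show ?case by simp
next
  case (Cons y x)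
  obtain a g where "y = (a, g)" by (cases y)
  then show ?case using Cons by simp
qed

definition req_words :: "nat \<Rightarrow> (nat \<Rightarrow> fword) \<Rightarrow> req \<Rightarrow> fword list" where
  "req_words m F r = (case r of
      PosReq x \<Rightarrow> map snd (fgr_mult m (fgr_star m (qelt_val F x)) (qelt_val F x))
    | ConjReq a b \<Rightarrow> [fp_mult m (fp_mult m (fp_inv m (F b)) (F a)) (F b), F a])"

lemma req_words_carrier:
  assumes "range F \<subseteq> fp_carrier n m"
  shows "set (req_words m F r) \<subseteq> fp_carrier n m"
proof -
  have "F l \<in> fp_carrier n m" for l using assms by blast
  then show ?thesis
    by (cases r) (auto simp: req_words_def fgr_mult_def fgr_star_def qelt_val_def
        intro!: fp_mult_carrier fp_inv_carrier)
qed

lemma req_relax_cong: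
  assumes "\<forall>g\<in>set (req_words m F r). \<tau>1 g = \<tau>2 g"
  shows "req_relax k m F \<tau>1 r = req_relax k m F \<tau>2 r"
proof (cases r)
  case (PosReq x)
  then have "fgr_eval \<tau>1 (fgr_mult m (fgr_star m (qelt_val F x)) (qelt_val F x))
      = fgr_eval \<tau>2 (fgr_mult m (fgr_star m (qelt_val F x)) (qelt_val F x))"
    using assms by (intro fgr_eval_cong) (simp add: req_words_def)
  then show ?thesis using PosReq by (simp add: req_relax_def)
next
  case (ConjReq a b)
  then show ?thesis using assms by (simp add: req_relax_def req_words_def)
qed

lemma adapted_cong:
  assumes "\<forall>v\<in>{1..n}. \<forall>w\<in>{1..n}. \<forall>i\<in>{1..m}. \<forall>j\<in>{1..m}.
    \<forall>g\<in>snd ` set (qelt_val (E n m) (S v w i j k n m)). \<tau>1 g = \<tau>2 g"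
  shows "adapted k n m E S p \<tau>1 = adapted k n m E S p \<tau>2"
  using assms fgr_eval_cong unfolding adapted_def by (metis (no_types, lifting))

definition relevant_words ::
    "nat \<Rightarrow> nat \<Rightarrow> nat \<Rightarrow> (nat \<Rightarrow> nat \<Rightarrow> nat \<Rightarrow> fword) \<Rightarrow> (nat \<Rightarrow> req)
      \<Rightarrow> (nat \<Rightarrow> nat \<Rightarrow> nat \<Rightarrow> nat \<Rightarrow> nat \<Rightarrow> nat \<Rightarrow> nat \<Rightarrow> qelt) \<Rightarrow> fword set" where
  "relevant_words k n m E R S = (\<Union>l\<in>{1..k}. set (req_words m (E n m) (R l)))
     \<union> (\<Union>v\<in>{1..n}. \<Union>w\<in>{1..n}. \<Union>i\<in>{1..m}. \<Union>j\<in>{1..m}. snd ` set (qelt_val (E n m) (S v w i j k n m)))"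

lemma finite_relevant_words: "finite (relevant_words k n m E R S)"
  by (simp add: relevant_words_def)

lemma req_words_subset_relevant_words:
  assumes "l \<in> {1..k}"
  shows "set (req_words m (E n m) (R l)) \<subseteq> relevant_words k n m E R S"
  unfolding relevant_words_def by (intro subsetI UnI1 UN_I[OF assms])

lemma S_words_subset_relevant_words:
  assumes "v \<in> {1..n}" "w \<in> {1..n}" "i \<in> {1..m}" "j \<in> {1..m}"
  shows "snd ` set (qelt_val (E n m) (S v w i j k n m)) \<subseteq> relevant_words k n m E R S"
  unfolding relevant_words_def
  by (intro subsetI UnI2 UN_I[OF assms(1)] UN_I[OF assms(2)] UN_I[OF assms(3)] UN_I[OF assms(4)])

lemma relevant_words_carrier:
  assumes "range (E n m) \<subseteq> fp_carrier n m"
  shows "relevant_words k n m E R S \<subseteq> fp_carrier n m"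
proof -
  have "set (req_words m (E n m) r) \<subseteq> fp_carrier n m" for r
    using req_words_carrier[OF assms] .
  moreover have "E n m l \<in> fp_carrier n m" for l
    using assms by blast
  ultimately show ?thesis
    by (auto simp: relevant_words_def qelt_val_def)
qed

section \<open>Correlation tables\<close>

lemma concat_const_len:
  "\<forall>a\<in>set xs. length (g a) = B \<Longrightarrow> length (concat (map g xs)) = length xs * B"
  by (induction xs) auto

lemma concat_const_nth:
  assumes "\<forall>a\<in>set xs. length (g a) = B" "a < length xs" "r < B"
  shows "concat (map g xs) ! (a * B + r) = g (xs ! a) ! r"
  using assms
proof (induction xs arbitrary: a)
  case Nil then show ?case by simp
next
  case (Cons x xs)
  show ?case
  proof (cases a)
    case 0 then show ?thesis using Cons.prems by (simp add: nth_append)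
  next
    case (Suc a')
    have "concat (map g (x # xs)) ! (a * B + r) = concat (map g xs) ! (a' * B + r)"
      using Cons.prems Suc by (simp add: nth_append)
    then show ?thesis using Cons.IH[of a'] Cons.prems Suc by simp
  qed
qed

context
  fixes n m :: nat and p :: "nat \<Rightarrow> nat \<Rightarrow> nat \<Rightarrow> nat \<Rightarrow> rat"
begin

definition corr_row :: "nat \<Rightarrow> nat \<Rightarrow> nat \<Rightarrow> rat list" where
  "corr_row v w i = map (\<lambda>j. p i j v w) [1..<m+1]"

definition corr_block :: "nat \<Rightarrow> nat \<Rightarrow> rat list" where
  "corr_block v w = concat (map (corr_row v w) [1..<m+1])"

definition corr_slab :: "nat \<Rightarrow> rat list" where
  "corr_slab v = concat (map (corr_block v) [1..<n+1])"

lemma corr_list_eq_slabs: "corr_list n m p = concat (map corr_slab [1..<n+1])"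
  unfolding corr_list_def corr_slab_def corr_block_def corr_row_def by simp

lemma length_corr_row: "length (corr_row v w i) = m"
  by (simp add: corr_row_def)

lemma length_corr_block: "length (corr_block v w) = m * m"
  unfolding corr_block_def by (subst concat_const_len[where B=m]) (simp_all add: length_corr_row)

lemma length_corr_slab: "length (corr_slab v) = n * (m * m)"
  unfolding corr_slab_def by (subst concat_const_len[where B="m*m"]) (simp_all add: length_corr_block)

end

lemma corr_list_len: "length (corr_list n m p) = n * n * m * m"
  unfolding corr_list_eq_slabs by (subst concat_const_len[where B="n*(m*m)"]) (simp_all add: length_corr_slab)

definition corr_index :: "nat \<Rightarrow> nat \<Rightarrow> nat \<Rightarrow> nat \<Rightarrow> nat \<Rightarrow> nat \<Rightarrow> nat" where
  "corr_index n m v w i j = ((v * n + w) * m + i) * m + j"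

lemma mult_add_less_mult: "a < (A::nat) \<Longrightarrow> r < B \<Longrightarrow> a * B + r < A * B"
proof -
  assume a: "a < A" and r: "r < B"
  have "Suc a * B \<le> A * B" using mult_le_mono1[of "Suc a" A B] a by simp
  then show ?thesis using r by simp
qed

lemma corr_index_eq: "corr_index n m v w i j = v * (n * (m * m)) + (w * (m * m) + (i * m + j))"
  unfolding corr_index_def by (simp add: algebra_simps)

lemma corr_list_nth:
  assumes "v < n" "w < n" "i < m" "j < m"
  shows "corr_list n m p ! corr_index n m v w i j = p (Suc i) (Suc j) (Suc v) (Suc w)"
proof -
  have b2: "i * m + j < m * m" using mult_add_less_mult[OF assms(3,4)] .
  have b1: "w * (m * m) + (i * m + j) < n * (m * m)" using mult_add_less_mult[OF assms(2) b2] .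
  have "corr_list n m p ! corr_index n m v w i j = corr_slab n m p (Suc v) ! (w * (m * m) + (i * m + j))"
    unfolding corr_list_eq_slabs corr_index_eq using assms(1) b1
    by (subst concat_const_nth[where B="n*(m*m)"]) (simp_all add: length_corr_slab del: upt_Suc)
  also have "\<dots> = corr_block m p (Suc v) (Suc w) ! (i * m + j)"
    unfolding corr_slab_def using assms(2) b2
    by (subst concat_const_nth[where B="m*m"]) (simp_all add: length_corr_block del: upt_Suc)
  also have "\<dots> = corr_row m p (Suc v) (Suc w) (Suc i) ! j"
    unfolding corr_block_def using assms(3,4)
    by (subst concat_const_nth[where B="m"]) (simp_all add: length_corr_row del: upt_Suc)
  also have "\<dots> = p (Suc i) (Suc j) (Suc v) (Suc w)"
    unfolding corr_row_def using assms(4) by (simp del: upt_Suc)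
  finally show ?thesis .
qed

lemma corr_index_surj:
  assumes "t < n * n * m * m"
  shows "\<exists>v w i j. v < n \<and> w < n \<and> i < m \<and> j < m \<and> t = corr_index n m v w i j"
proof -
  have m: "m > 0" and n: "n > 0"
    using assms by (auto intro!: gr0I)
  let ?j = "t mod m" let ?t1 = "t div m"
  let ?i = "?t1 mod m" let ?t2 = "?t1 div m"
  let ?w = "?t2 mod n" let ?v = "?t2 div n"
  have "t = corr_index n m ?v ?w ?i ?j" unfolding corr_index_def by simp
  moreover have "?v < n"
  proof -
    have "t < (n * n) * (m * m)" using assms by (simp add: ac_simps)
    then have "t div (m * m) < n * n" by (simp add: div_less_iff_less_mult m)
    then have "?t2 < n * n" by (simp add: div_mult2_eq)
    then show ?thesis by (simp add: div_less_iff_less_mult n)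
  qed
  ultimately show ?thesis using m n by (intro exI[of _ ?v] exI[of _ ?w] exI[of _ ?i] exI[of _ ?j]) simp
qed

lemma corr_index_less:
  assumes "v < n" "w < n" "i < m" "j < m"
  shows "corr_index n m v w i j < n * n * m * m"
proof -
  have b2: "i * m + j < m * m" using mult_add_less_mult[OF assms(3,4)] .
  have b1: "w * (m * m) + (i * m + j) < n * (m * m)" using mult_add_less_mult[OF assms(2) b2] .
  have "v * (n * (m * m)) + (w * (m * m) + (i * m + j)) < n * (n * (m * m))" using mult_add_less_mult[OF assms(1) b1] .
  then show ?thesis unfolding corr_index_eq by (simp add: ac_simps)
qed

text \<open>\<open>prob_code_ok r\<close> says that \<open>r\<close> is the \<open>rat_code\<close> of a rational in \<open>[0, 1]\<close>; the bounded
  quantifier checks that the fraction is in lowest terms.\<close>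

definition prob_code_ok :: "nat \<Rightarrow> bool" where
  "prob_code_ok r \<longleftrightarrow> fst (prod_decode r) mod 2 = 0 \<and> snd (prod_decode r) mod 2 = 0 \<and> 2 \<le> snd (prod_decode r)
     \<and> fst (prod_decode r) \<le> snd (prod_decode r)
     \<and> all_less (Suc (snd (prod_decode r) div 2)) (\<lambda>q. \<not> (2 \<le> q \<and> (fst (prod_decode r) div 2) mod q = 0 \<and> (snd (prod_decode r) div 2) mod q = 0))"

lemma int_encode_nonneg: "a \<ge> 0 \<Longrightarrow> int_encode a = 2 * nat a"
  by (simp add: int_encode_def sum_encode_def)

lemma coprime_iff_all_less:
  fixes a b :: nat
  assumes "1 \<le> b"
  shows "coprime a b \<longleftrightarrow> all_less (Suc b) (\<lambda>q. \<not> (2 \<le> q \<and> a mod q = 0 \<and> b mod q = 0))"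
proof
  assume "coprime a b"
  then show "all_less (Suc b) (\<lambda>q. \<not> (2 \<le> q \<and> a mod q = 0 \<and> b mod q = 0))"
    unfolding all_less_def using coprime_common_divisor_nat by fastforce
next
  assume "all_less (Suc b) (\<lambda>q. \<not> (2 \<le> q \<and> a mod q = 0 \<and> b mod q = 0))"
  moreover have "0 < gcd a b" "gcd a b < Suc b"
    using assms by (simp_all add: gcd_le2_nat le_imp_less_Suc)
  ultimately have "\<not> 2 \<le> gcd a b"
    unfolding all_less_def by (metis dvd_imp_mod_0 gcd_dvd1 gcd_dvd2)
  then have "gcd a b = 1" using \<open>0 < gcd a b\<close> by linarith
  then show "coprime a b" by (simp add: coprime_iff_gcd_eq_1)
qed

lemma prob_code_ok_prod_encode:
  "prob_code_ok (prod_encode (2 * a, 2 * b)) \<longleftrightarrow> 1 \<le> b \<and> a \<le> b \<and> coprime a b"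
  by (auto simp: prob_code_ok_def coprime_iff_all_less)

lemma prob_code_ok_rat_code:
  assumes "0 \<le> q" "q \<le> 1"
  shows "prob_code_ok (rat_code q)"
proof -
  obtain a b where ab: "quotient_of q = (a, b)" by (cases "quotient_of q")
  have b: "b > 0" using quotient_of_denom_pos[OF ab] .
  have "q = of_int a / of_int b" using quotient_of_div[OF ab] .
  then have a: "0 \<le> a" "a \<le> b" using assms b by (simp_all add: zero_le_divide_iff divide_le_eq_1_pos)
  have "coprime (nat a) (nat b)" using quotient_of_coprime[OF ab] a b
    by (metis coprime_int_iff int_nat_eq less_le)
  moreover have "rat_code q = prod_encode (2 * nat a, 2 * nat b)"
    unfolding rat_code_def ab using a b by (simp add: int_encode_nonneg)
  ultimately show ?thesis using a b by (simp add: prob_code_ok_prod_encode nat_mono)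
qed

definition prob_decode :: "nat \<Rightarrow> rat" where
  "prob_decode r = Fract (int (fst (prod_decode r) div 2)) (int (snd (prod_decode r) div 2))"

lemma prob_code_ok_decode:
  assumes "prob_code_ok r"
  shows "rat_code (prob_decode r) = r" "0 \<le> prob_decode r" "prob_decode r \<le> 1"
proof -
  obtain a b where r: "r = prod_encode (2 * a, 2 * b)"
    using assms unfolding prob_code_ok_def by (metis dvd_mult_div_cancel mod_0_imp_dvd prod_decode_inverse surjective_pairing)
  then have ab: "1 \<le> b" "a \<le> b" "coprime (int a) (int b)"
    using assms by (simp_all add: prob_code_ok_prod_encode)
  then have "quotient_of (prob_decode r) = (int a, int b)"
    by (simp add: r prob_decode_def quotient_of_Fract normalize_def coprime_iff_gcd_eq_1[symmetric])
  then show "rat_code (prob_decode r) = r"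
    using ab by (simp add: rat_code_def r int_encode_nonneg)
  have "prob_decode r = of_int (int a) / of_int (int b)"
    by (simp add: r prob_decode_def Fract_of_int_quotient)
  then show "0 \<le> prob_decode r" "prob_decode r \<le> 1" using ab by simp_all
qed
lemma rat_code_inj: "rat_code q = rat_code q' \<Longrightarrow> q = q'"
  unfolding rat_code_def
  by (auto simp: case_prod_beta prod_encode_eq int_encode_eq prod_eq_iff intro: quotient_of_inject)

lemma prob_code_ok_rat_code_iff: "prob_code_ok (rat_code q) \<longleftrightarrow> 0 \<le> q \<and> q \<le> 1"
proof
  assume ok: "prob_code_ok (rat_code q)"
  then have "prob_decode (rat_code q) = q" using prob_code_ok_decode(1) rat_code_inj by blast
  then show "0 \<le> q \<and> q \<le> 1" using prob_code_ok_decode(2,3)[OF ok] by simp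
qed (simp add: prob_code_ok_rat_code)

lemma ball_set_corr_list:
  "(\<forall>q\<in>set (corr_list n m p). P q) \<longleftrightarrow>
     (\<forall>v\<in>{1..n}. \<forall>w\<in>{1..n}. \<forall>i\<in>{1..m}. \<forall>j\<in>{1..m}. P (p i j v w))"
  unfolding corr_list_def by (simp add: atLeastLessThanSuc_atLeastAtMost del: upt_Suc)

lemma corr_code_ok_iff:
  "code_all prob_code_ok (list_encode (map rat_code (corr_list n m p))) \<longleftrightarrow>
     (\<forall>v\<in>{1..n}. \<forall>w\<in>{1..n}. \<forall>i\<in>{1..m}. \<forall>j\<in>{1..m}. 0 \<le> p i j v w \<and> p i j v w \<le> 1)"
  by (simp add: code_all_def ball_set_corr_list prob_code_ok_rat_code_iff)

lemma corr_code_surj: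
  assumes "length cs = n * n * m * m" "\<forall>r\<in>set cs. prob_code_ok r"
  shows "\<exists>p. cs = map rat_code (corr_list n m p)"
proof
  define p where "p i j v w = prob_decode (cs ! corr_index n m (v - 1) (w - 1) (i - 1) (j - 1))" for i j v w
  show "cs = map rat_code (corr_list n m p)"
  proof (rule nth_equalityI)
    show "length cs = length (map rat_code (corr_list n m p))" by (simp add: corr_list_len assms(1))
  next
    fix t assume "t < length cs"
    then obtain v w i j where vwij: "v < n" "w < n" "i < m" "j < m" and t: "t = corr_index n m v w i j"
      using corr_index_surj assms(1) by metis
    have "map rat_code (corr_list n m p) ! t = rat_code (prob_decode (cs ! t))"
      using corr_list_nth[OF vwij] corr_index_less[OF vwij] by (simp add: t p_def corr_list_len)
    then show "cs ! t = map rat_code (corr_list n m p) ! t"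
      using prob_code_ok_decode(1) assms(2) \<open>t < length cs\<close> by simp
  qed
qed

section \<open>Certificates\<close>

definition E_word :: "(nat \<Rightarrow> nat) \<Rightarrow> nat \<Rightarrow> nat \<Rightarrow> nat \<Rightarrow> nat" where
  "E_word Ec n m l = Ec (code_Cons n (code_Cons m (code_Cons l 0)))"

definition S_elt :: "(nat \<Rightarrow> nat) \<Rightarrow> nat \<Rightarrow> nat \<Rightarrow> nat \<Rightarrow> nat \<Rightarrow> nat \<Rightarrow> nat \<Rightarrow> nat \<Rightarrow> nat" where
  "S_elt Sc v w i j k n m = Sc (code_Cons v (code_Cons w (code_Cons i (code_Cons j (code_Cons k (code_Cons n (code_Cons m 0)))))))"

definition lookup :: "nat \<Rightarrow> nat \<Rightarrow> nat" where
  "lookup T w = code_foldl (\<lambda>e r. if fst (prod_decode e) = w then snd (prod_decode e) else r) 0 T"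

definition pos_sum :: "(nat \<Rightarrow> nat) \<Rightarrow> nat \<Rightarrow> nat \<Rightarrow> nat \<Rightarrow> nat \<Rightarrow> nat" where
  "pos_sum Ec T n m x = code_foldl (\<lambda>e1 r1. code_foldl (\<lambda>e2 r2. gadd r2
      (gmult (gmult (gcnj (gcode_of_gq (fst (prod_decode e1)))) (gcode_of_gq (fst (prod_decode e2))))
            (lookup T (code_mult m (code_inv m (E_word Ec n m (snd (prod_decode e1)))) (E_word Ec n m (snd (prod_decode e2))))))) r1 x) 0 x"

definition conj_defect :: "(nat \<Rightarrow> nat) \<Rightarrow> nat \<Rightarrow> nat \<Rightarrow> nat \<Rightarrow> nat \<Rightarrow> nat \<Rightarrow> nat" where
  "conj_defect Ec T n m a b = gdiff (lookup T (code_mult m (code_mult m (code_inv m (E_word Ec n m b)) (E_word Ec n m a)) (E_word Ec n m b)))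
                              (lookup T (E_word Ec n m a))"

definition req_test :: "(nat \<Rightarrow> nat) \<Rightarrow> (nat \<Rightarrow> nat) \<Rightarrow> nat \<Rightarrow> nat \<Rightarrow> nat \<Rightarrow> nat \<Rightarrow> nat \<Rightarrow> bool" where
  "req_test Ec Rc T k n m l = (if fst (prod_decode (Rc l)) = 0
      then gnear_nonneg (pos_sum Ec T n m (snd (prod_decode (Rc l)))) k
      else gnorm_less (conj_defect Ec T n m (fst (prod_decode (snd (prod_decode (Rc l))))) (snd (prod_decode (snd (prod_decode (Rc l)))))) k)"

definition S_value :: "(nat \<Rightarrow> nat) \<Rightarrow> (nat \<Rightarrow> nat) \<Rightarrow> nat \<Rightarrow> nat \<Rightarrow> nat \<Rightarrow> nat \<Rightarrow> nat \<Rightarrow> nat \<Rightarrow> nat \<Rightarrow> nat \<Rightarrow> nat" where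
  "S_value Ec Sc T k n m v w i j = code_foldl (\<lambda>e r. gadd r (gmult (gcode_of_gq (fst (prod_decode e))) (lookup T (E_word Ec n m (snd (prod_decode e)))))) 0
      (S_elt Sc v w i j k n m)"

definition adapted_test :: "(nat \<Rightarrow> nat) \<Rightarrow> (nat \<Rightarrow> nat) \<Rightarrow> nat \<Rightarrow> nat \<Rightarrow> nat \<Rightarrow> nat \<Rightarrow> nat \<Rightarrow> nat \<Rightarrow> nat \<Rightarrow> nat \<Rightarrow> nat \<Rightarrow> bool" where
  "adapted_test Ec Sc T k n m c v w i j \<longleftrightarrow>
     gnorm_less (gdiff (gcode_of_rat (code_nth c (corr_index n m v w i j)))
       (S_value Ec Sc T k n m (Suc v) (Suc w) (Suc i) (Suc j))) k"

text \<open>\<open>certifies Ec Rc Sc x y\<close>: \<open>x\<close> codes a list \<open>[k, n, m, C]\<close>, \<open>C\<close> lists the codes of the entries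
  of \<open>p\<close> in the order of \<open>corr_list\<close>, and \<open>y\<close> is a table of pairs (word code, value code) whose
  trace passes all tests.\<close>

definition certifies :: "(nat \<Rightarrow> nat) \<Rightarrow> (nat \<Rightarrow> nat) \<Rightarrow> (nat \<Rightarrow> nat) \<Rightarrow> nat \<Rightarrow> nat \<Rightarrow> bool" where
  "certifies Ec Rc Sc x y \<longleftrightarrow> code_length x = 4 \<and> 1 \<le> code_nth x 0 \<and> 2 \<le> code_nth x 1 \<and> 2 \<le> code_nth x 2
     \<and> code_length (code_nth x 3) = code_nth x 1 * code_nth x 1 * code_nth x 2 * code_nth x 2
     \<and> code_all prob_code_ok (code_nth x 3)
     \<and> code_all (\<lambda>e. gnorm_le1 (snd (prod_decode e))) y
     \<and> all_less (code_nth x 0) (\<lambda>l. req_test Ec Rc y (code_nth x 0) (code_nth x 1) (code_nth x 2) (Suc l))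
     \<and> all_less (code_nth x 1) (\<lambda>v. all_less (code_nth x 1) (\<lambda>w. all_less (code_nth x 2) (\<lambda>i. all_less (code_nth x 2) (\<lambda>j.
          adapted_test Ec Sc y (code_nth x 0) (code_nth x 1) (code_nth x 2) (code_nth x 3) v w i j))))"

text \<open>Words missing from the table get the value 0.\<close>

definition table_trace :: "nat \<Rightarrow> fword \<Rightarrow> complex" where "table_trace T w = gval (lookup T (word_code w))"

lemma code_foldl_lookup:
  assumes "\<forall>x\<in>set W. key x = k0 \<longrightarrow> val x = V"
  shows "code_foldl (\<lambda>e r. if fst (prod_decode e) = k0 then snd (prod_decode e) else r) r0
           (list_encode (map (\<lambda>x. prod_encode (key x, val x)) W)) = (if \<exists>x\<in>set W. key x = k0 then V else r0)"
  using assms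
proof (induction W arbitrary: r0)
  case Nil then show ?case by simp
next
  case (Cons x W)
  have "code_foldl (\<lambda>e r. if fst (prod_decode e) = k0 then snd (prod_decode e) else r) r0
           (list_encode (map (\<lambda>x. prod_encode (key x, val x)) (x # W)))
        = code_foldl (\<lambda>e r. if fst (prod_decode e) = k0 then snd (prod_decode e) else r)
           (if key x = k0 then val x else r0) (list_encode (map (\<lambda>x. prod_encode (key x, val x)) W))"
    by (simp only: list.map code_foldl_Cons prod_encode_inverse fst_conv snd_conv)
  then show ?case using Cons by auto
qed

lemma lookup_table:
  assumes "\<forall>x\<in>set W. key x = k0 \<longrightarrow> val x = V" "\<exists>x\<in>set W. key x = k0"
  shows "lookup (list_encode (map (\<lambda>x. prod_encode (key x, val x)) W)) k0 = V"
  unfolding lookup_def using code_foldl_lookup[OF assms(1), of 0] assms(2) by simp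

lemma code_foldl_lookup_range:
  "code_foldl (\<lambda>e r. if fst (prod_decode e) = k0 then snd (prod_decode e) else r) r0 (list_encode es)
     \<in> insert r0 ((\<lambda>e. snd (prod_decode e)) ` set es)"
proof (induction es arbitrary: r0)
  case Nil then show ?case by simp
next
  case (Cons e es)
  have "code_foldl (\<lambda>e r. if fst (prod_decode e) = k0 then snd (prod_decode e) else r) r0 (list_encode (e # es))
     = code_foldl (\<lambda>e r. if fst (prod_decode e) = k0 then snd (prod_decode e) else r)
         (if fst (prod_decode e) = k0 then snd (prod_decode e) else r0) (list_encode es)"
    by (simp only: code_foldl_Cons)
  then show ?case using Cons[of "if fst (prod_decode e) = k0 then snd (prod_decode e) else r0"] by auto
qed

lemma table_trace_norm_le1:
  assumes "code_all (\<lambda>e. gnorm_le1 (snd (prod_decode e))) T"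
  shows "cmod (table_trace T w) \<le> 1"
proof -
  have "lookup T (word_code w) \<in> insert 0 ((\<lambda>e. snd (prod_decode e)) ` set (list_decode T))"
    unfolding lookup_def using code_foldl_lookup_range[of "word_code w" 0 "list_decode T"] by simp
  moreover have "gnorm_le1 0" by (simp add: gnorm_le1_iff)
  ultimately show ?thesis using assms unfolding table_trace_def code_all_def by (auto simp: gnorm_le1_iff[symmetric])
qed

lemma table_trace_Rats: "Re (table_trace T w) \<in> \<rat>" "Im (table_trace T w) \<in> \<rat>"
  unfolding table_trace_def by (rule gval_Rats)+

context
  fixes Ec Rc Sc :: "nat \<Rightarrow> nat"
  assumes Ec: "rec_fn 1 (\<lambda>ys. Ec (ys!0))" and Rc: "rec_fn 1 (\<lambda>ys. Rc (ys!0))" and Sc: "rec_fn 1 (\<lambda>ys. Sc (ys!0))"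
begin

lemma rec_fn_Ec: "rec_fn k a \<Longrightarrow> rec_fn k (\<lambda>xs. Ec (a xs))" by (rule rec_fn_comp1[OF Ec])
lemma rec_fn_Rc: "rec_fn k a \<Longrightarrow> rec_fn k (\<lambda>xs. Rc (a xs))" by (rule rec_fn_comp1[OF Rc])
lemma rec_fn_Sc: "rec_fn k a \<Longrightarrow> rec_fn k (\<lambda>xs. Sc (a xs))" by (rule rec_fn_comp1[OF Sc])

lemma rec_fn_E_word: "rec_fn k a \<Longrightarrow> rec_fn k b \<Longrightarrow> rec_fn k c \<Longrightarrow> rec_fn k (\<lambda>xs. E_word Ec (a xs) (b xs) (c xs))"
  unfolding E_word_def by (rule rec_fn_Ec rec_intros | assumption)+

lemma rec_fn_S_elt: "rec_fn k a0 \<Longrightarrow> rec_fn k a1 \<Longrightarrow> rec_fn k a2 \<Longrightarrow> rec_fn k a3 \<Longrightarrow> rec_fn k a4 \<Longrightarrow> rec_fn k a5 \<Longrightarrow> rec_fn k a6 \<Longrightarrow>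
   rec_fn k (\<lambda>xs. S_elt Sc (a0 xs) (a1 xs) (a2 xs) (a3 xs) (a4 xs) (a5 xs) (a6 xs))"
  unfolding S_elt_def by (rule rec_fn_Sc rec_intros | assumption)+

lemma rec_fn_lookup2: "rec_fn 2 (\<lambda>ys. lookup (ys!0) (ys!1))"
  unfolding lookup_def by (rule rec_intros | simp)+
lemmas rec_fn_lookup = rec_fn_comp2[OF rec_fn_lookup2]

lemma rec_fn_pos_sum4: "rec_fn 4 (\<lambda>ys. pos_sum Ec (ys!0) (ys!1) (ys!2) (ys!3))"
  unfolding pos_sum_def by (rule rec_fn_E_word rec_fn_lookup rec_intros | simp)+
lemmas rec_fn_pos_sum = rec_fn_comp4[OF rec_fn_pos_sum4]

lemma rec_fn_conj_defect5: "rec_fn 5 (\<lambda>ys. conj_defect Ec (ys!0) (ys!1) (ys!2) (ys!3) (ys!4))"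
  unfolding conj_defect_def by (rule rec_fn_E_word rec_fn_lookup rec_intros | simp)+
lemmas rec_fn_conj_defect = rec_fn_comp5[OF rec_fn_conj_defect5]

lemma rec_pred_req_test5: "rec_pred 5 (\<lambda>ys. req_test Ec Rc (ys!0) (ys!1) (ys!2) (ys!3) (ys!4))"
  unfolding req_test_def by (rule rec_fn_Rc rec_fn_pos_sum rec_fn_conj_defect rec_intros | simp)+
lemmas rec_pred_req_test = rec_pred_comp5[OF rec_pred_req_test5]

lemma rec_fn_S_value8: "rec_fn 8 (\<lambda>ys. S_value Ec Sc (ys!0) (ys!1) (ys!2) (ys!3) (ys!4) (ys!5) (ys!6) (ys!7))"
  unfolding S_value_def by (rule rec_fn_E_word rec_fn_S_elt rec_fn_lookup rec_intros | simp)+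
lemmas rec_fn_S_value = rec_fn_comp8[OF rec_fn_S_value8]

lemma rec_pred_prob_code_ok1: "rec_pred 1 (\<lambda>ys. prob_code_ok (ys!0))"
  unfolding prob_code_ok_def by (rule rec_intros | simp)+
lemmas rec_pred_prob_code_ok = rec_pred_comp1[OF rec_pred_prob_code_ok1]

lemma rec_pred_adapted_test9: "rec_pred 9 (\<lambda>ys. adapted_test Ec Sc (ys!0) (ys!1) (ys!2) (ys!3) (ys!4) (ys!5) (ys!6) (ys!7) (ys!8))"
  unfolding adapted_test_def corr_index_def by (rule rec_fn_S_value rec_intros | simp)+
lemmas rec_pred_adapted_test = rec_pred_comp9[OF rec_pred_adapted_test9]

lemma rec_pred_certifies: "rec_pred 2 (\<lambda>ys. certifies Ec Rc Sc (ys!0) (ys!1))"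
  unfolding certifies_def by (rule rec_pred_req_test rec_pred_adapted_test rec_pred_prob_code_ok rec_intros | simp)+

end

definition E_code :: "(nat \<Rightarrow> nat \<Rightarrow> nat \<Rightarrow> fword) \<Rightarrow> nat \<Rightarrow> nat" where
  "E_code E = (\<lambda>c. case list_decode c of [n, m, l] \<Rightarrow> word_code (E n m l) | _ \<Rightarrow> 0)"
definition S_code :: "(nat \<Rightarrow> nat \<Rightarrow> nat \<Rightarrow> nat \<Rightarrow> nat \<Rightarrow> nat \<Rightarrow> nat \<Rightarrow> qelt) \<Rightarrow> nat \<Rightarrow> nat" where
  "S_code S = (\<lambda>c. case list_decode c of [v, w, i, j, k, n, m] \<Rightarrow> qelt_code (S v w i j k n m) | _ \<Rightarrow> 0)"

lemma E_word_E_code: "E_word (E_code E) n m l = word_code (E n m l)"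
  unfolding E_word_def code_Cons3 E_code_def by simp

lemma S_elt_S_code: "S_elt (S_code S) v w i j k n m = qelt_code (S v w i j k n m)"
  unfolding S_elt_def code_Cons7 S_code_def by simp

definition qterm_code :: "gq \<times> nat \<Rightarrow> nat" where "qterm_code y = prod_encode (gq_code (fst y), snd y)"

lemma qelt_code_eq: "qelt_code x = list_encode (map qterm_code x)"
  unfolding qelt_code_def qterm_code_def by (rule arg_cong[where f=list_encode], rule map_cong) auto

lemma gval_pos_sum:
  "gval (pos_sum (E_code E) T n m (qelt_code x))
   = fgr_eval (table_trace T) (fgr_mult m (fgr_star m (qelt_val (E n m) x)) (qelt_val (E n m) x))"
proof -
  define G where "G e1 e2 = gmult (gmult (gcnj (gcode_of_gq (fst (prod_decode e1)))) (gcode_of_gq (fst (prod_decode e2))))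
            (lookup T (code_mult m (code_inv m (E_word (E_code E) n m (snd (prod_decode e1)))) (E_word (E_code E) n m (snd (prod_decode e2)))))" for e1 e2
  define t where "t y1 y2 = cnj (gq_val (fst y1)) * gq_val (fst y2) * table_trace T (fp_mult m (fp_inv m (E n m (snd y1))) (E n m (snd y2)))" for y1 y2
  have Gt: "gval (G (qterm_code y1) (qterm_code y2)) = t y1 y2" for y1 y2
    unfolding G_def t_def qterm_code_def table_trace_def
    by (simp add: gval_gmult gval_gcnj gval_gcode_of_gq E_word_E_code code_inv_word_code code_mult_word_code)
  have inner: "gval (code_foldl (\<lambda>e2 r2. gadd r2 (G e1 e2)) r1 (list_encode (map qterm_code x)))
       = gval r1 + (\<Sum>y2\<leftarrow>x. gval (G e1 (qterm_code y2)))" for e1 r1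
    using gval_code_foldl_sum[of "\<lambda>e2 r2. gadd r2 (G e1 e2)" "\<lambda>e2. gval (G e1 e2)" r1 "map qterm_code x"]
    by (simp add: gval_gadd comp_def)
  have outer: "gval (code_foldl (\<lambda>e1 r1. code_foldl (\<lambda>e2 r2. gadd r2 (G e1 e2)) r1 (list_encode (map qterm_code x))) 0 (list_encode (map qterm_code x)))
      = (\<Sum>y1\<leftarrow>x. \<Sum>y2\<leftarrow>x. t y1 y2)"
    using gval_code_foldl_sum[of "\<lambda>e1 r1. code_foldl (\<lambda>e2 r2. gadd r2 (G e1 e2)) r1 (list_encode (map qterm_code x))"
        "\<lambda>e1. \<Sum>y2\<leftarrow>x. gval (G e1 (qterm_code y2))" 0 "map qterm_code x"] inner
    by (simp add: comp_def Gt)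
  have lhs: "gval (pos_sum (E_code E) T n m (qelt_code x)) = (\<Sum>y1\<leftarrow>x. \<Sum>y2\<leftarrow>x. t y1 y2)"
    unfolding pos_sum_def qelt_code_eq G_def[symmetric] using outer by simp
  have rhs: "fgr_eval (table_trace T) (fgr_mult m (fgr_star m (qelt_val (E n m) x)) (qelt_val (E n m) x))
      = (\<Sum>y1\<leftarrow>x. \<Sum>y2\<leftarrow>x. t y1 y2)"
  proof -
    have "fgr_eval \<tau> (map (\<lambda>(b, h). (a * b, fp_mult m g h)) (qelt_val (E n m) x))
         = (\<Sum>y2\<leftarrow>x. a * gq_val (fst y2) * \<tau> (fp_mult m g (E n m (snd y2))))" for \<tau> a g
      unfolding qelt_val_def by (induction x) (auto simp: case_prod_beta)
    then show ?thesis
      unfolding fgr_mult_def fgr_star_def fgr_eval_concat t_def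
      by (simp add: qelt_val_def comp_def case_prod_beta)
  qed
  show ?thesis using lhs rhs by simp
qed

lemma gval_conj_defect:
  "gval (conj_defect (E_code E) T n m a b)
   = table_trace T (fp_mult m (fp_mult m (fp_inv m (E n m b)) (E n m a)) (E n m b)) - table_trace T (E n m a)"
  unfolding conj_defect_def table_trace_def by (simp add: gval_gdiff E_word_E_code code_inv_word_code code_mult_word_code)

lemma req_test_iff:
  assumes k: "1 \<le> k"
  shows "req_test (E_code E) (\<lambda>l. req_code (R l)) T k n m l \<longleftrightarrow> req_relax k m (E n m) (table_trace T) (R l)"
proof (cases "R l")
  case (PosReq x)
  then show ?thesis
    by (simp add: req_test_def req_code_def req_relax_def gnear_nonneg_iff[OF k] gval_pos_sum)
next
  case (ConjReq a b)
  then show ?thesis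
    by (simp add: req_test_def req_code_def req_relax_def gnorm_less_iff[OF k] gval_conj_defect)
qed

lemma fgr_eval_qelt_val: "(\<Sum>y\<leftarrow>xs. gq_val (fst y) * \<tau> (E n m (snd y))) = fgr_eval \<tau> (qelt_val (E n m) xs)"
  unfolding qelt_val_def by (induction xs) (auto simp: case_prod_beta)

lemma gval_S_value:
  "gval (S_value (E_code E) (S_code S) T k n m v w i j) = fgr_eval (table_trace T) (qelt_val (E n m) (S v w i j k n m))"
proof -
  define G where "G e = gmult (gcode_of_gq (fst (prod_decode e))) (lookup T (E_word (E_code E) n m (snd (prod_decode e))))" for e
  have Gt: "gval (G (qterm_code y)) = gq_val (fst y) * table_trace T (E n m (snd y))" for y
    unfolding G_def qterm_code_def table_trace_def by (simp add: gval_gmult gval_gcode_of_gq E_word_E_code)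
  have "gval (S_value (E_code E) (S_code S) T k n m v w i j) = (\<Sum>y\<leftarrow>S v w i j k n m. gq_val (fst y) * table_trace T (E n m (snd y)))"
    unfolding S_value_def S_elt_S_code qelt_code_eq G_def[symmetric]
    using gval_code_foldl_sum[of "\<lambda>e r. gadd r (G e)" "\<lambda>e. gval (G e)" 0 "map qterm_code (S v w i j k n m)"]
    by (simp add: gval_gadd comp_def Gt)
  also have "\<dots> = fgr_eval (table_trace T) (qelt_val (E n m) (S v w i j k n m))"
    using fgr_eval_qelt_val[of "table_trace T" E n m "S v w i j k n m"] .
  finally show ?thesis .
qed

lemma adapted_test_iff:
  assumes k: "1 \<le> k" and c: "code_nth c (corr_index n m v w i j) = rat_code q"
  shows "adapted_test (E_code E) (S_code S) T k n m c v w i j \<longleftrightarrow>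
     cmod (complex_of_real (of_rat q) - fgr_eval (table_trace T) (qelt_val (E n m) (S (Suc v) (Suc w) (Suc i) (Suc j) k n m))) < 1 / real k"
  using c unfolding adapted_test_def
  by (simp add: gnorm_less_iff[OF k] gval_gdiff gval_gcode_of_rat gval_S_value)

lemma table_trace_exists:
  assumes "finite U" "\<forall>g\<in>U. Re (\<tau> g) \<in> \<rat> \<and> Im (\<tau> g) \<in> \<rat> \<and> cmod (\<tau> g) \<le> 1"
  obtains T where "\<forall>g\<in>U. table_trace T g = \<tau> g" "code_all (\<lambda>e. gnorm_le1 (snd (prod_decode e))) T"
proof -
  obtain W where W: "set W = U" using finite_list[OF assms(1)] by blast
  define val where "val g = (SOME c. gval c = \<tau> g)" for g
  have val: "gval (val g) = \<tau> g" if "g \<in> set W" for g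
    unfolding val_def using gval_surj assms(2) that W by (metis (mono_tags, lifting) someI_ex)
  define T where "T = list_encode (map (\<lambda>g. prod_encode (word_code g, val g)) W)"
  have "table_trace T g = \<tau> g" if "g \<in> set W" for g
  proof -
    have "lookup T (word_code g) = val g"
      unfolding T_def by (rule lookup_table) (use that word_code_inj in auto)
    then show ?thesis unfolding table_trace_def using val that by simp
  qed
  moreover have "code_all (\<lambda>e. gnorm_le1 (snd (prod_decode e))) T"
    using assms(2) val W by (auto simp: code_all_def T_def gnorm_le1_iff)
  ultimately show thesis using that W by blast
qed

lemma all_less_req_test_iff:
  assumes "1 \<le> k"
  shows "all_less k (\<lambda>l. req_test (E_code E) (\<lambda>l. req_code (R l)) T k n m (Suc l))
     \<longleftrightarrow> (\<forall>l\<in>{1..k}. req_relax k m (E n m) (table_trace T) (R l))"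
  unfolding all_less_def ball_atLeastAtMost_1_iff req_test_iff[OF assms] by (rule refl)

lemma all_less_adapted_test_iff:
  assumes "1 \<le> k"
  shows "all_less n (\<lambda>v. all_less n (\<lambda>w. all_less m (\<lambda>i. all_less m (\<lambda>j.
      adapted_test (E_code E) (S_code S) T k n m (list_encode (map rat_code (corr_list n m p))) v w i j))))
     \<longleftrightarrow> adapted k n m E S p (table_trace T)"
proof -
  let ?close = "\<lambda>v w i j. cmod (of_real (of_rat (p i j v w))
      - fgr_eval (table_trace T) (qelt_val (E n m) (S v w i j k n m))) < 1 / real k"
  have "adapted_test (E_code E) (S_code S) T k n m (list_encode (map rat_code (corr_list n m p))) v w i j
      \<longleftrightarrow> ?close (Suc v) (Suc w) (Suc i) (Suc j)" if "v < n" "w < n" "i < m" "j < m" for v w i j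
    using adapted_test_iff[OF assms] corr_list_nth[OF that] corr_index_less[OF that]
    by (simp add: corr_list_len)
  then show ?thesis unfolding adapted_def all_less_def ball_atLeastAtMost_1_iff by simp
qed

lemma certifies_kmnp_code_iff:
  assumes "1 \<le> k" "2 \<le> n" "2 \<le> m"
  shows "certifies (E_code E) (\<lambda>l. req_code (R l)) (S_code S) (kmnp_code k n m p) T \<longleftrightarrow>
     (\<forall>v\<in>{1..n}. \<forall>w\<in>{1..n}. \<forall>i\<in>{1..m}. \<forall>j\<in>{1..m}. 0 \<le> p i j v w \<and> p i j v w \<le> 1) \<and>
     code_all (\<lambda>e. gnorm_le1 (snd (prod_decode e))) T \<and>
     (\<forall>l\<in>{1..k}. req_relax k m (E n m) (table_trace T) (R l)) \<and>
     adapted k n m E S p (table_trace T)"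
  using assms
  by (simp add: certifies_def kmnp_code_def corr_list_len corr_code_ok_iff all_less_req_test_iff
      all_less_adapted_test_iff del: list_encode.simps)

lemma certifies_imp_kmnp_code:
  assumes "certifies Ec Rc Sc x T"
  obtains k n m p where "x = kmnp_code k n m p" "1 \<le> k" "2 \<le> n" "2 \<le> m"
proof -
  obtain k n m cs where x: "x = list_encode [k, n, m, list_encode cs]"
    using assms unfolding certifies_def
    by (metis code_length_list_encode length_4_conv list_decode_inverse)
  then have "1 \<le> k" "2 \<le> n" "2 \<le> m" and cs: "length cs = n * n * m * m" "\<forall>r\<in>set cs. prob_code_ok r"
    using assms by (simp_all add: certifies_def code_all_def del: list_encode.simps)
  moreover obtain p where "cs = map rat_code (corr_list n m p)"
    using corr_code_surj[OF cs] by blast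
  then have "x = kmnp_code k n m p"
    unfolding x kmnp_code_def by simp
  ultimately show thesis using that by blast
qed

lemma certifies_imp_Xcodes:
  assumes "certifies (E_code E) (\<lambda>l. req_code (R l)) (S_code S) x T"
  shows "x \<in> Xcodes E R S"
proof -
  obtain k n m p where x: "x = kmnp_code k n m p" and kmn: "1 \<le> k" "2 \<le> n" "2 \<le> m"
    using certifies_imp_kmnp_code[OF assms] .
  then have p: "\<forall>v\<in>{1..n}. \<forall>w\<in>{1..n}. \<forall>i\<in>{1..m}. \<forall>j\<in>{1..m}. 0 \<le> p i j v w \<and> p i j v w \<le> 1"
    and bound: "code_all (\<lambda>e. gnorm_le1 (snd (prod_decode e))) T"
    and relax: "\<forall>l\<in>{1..k}. req_relax k m (E n m) (table_trace T) (R l)"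
    and adapted: "adapted k n m E S p (table_trace T)"
    using assms certifies_kmnp_code_iff by blast+
  have "approx_trace k n m E R (table_trace T)"
    unfolding approx_trace_def using relax table_trace_norm_le1[OF bound] by blast
  then have "p \<in> Xset k n m E R S"
    unfolding Xset_def using p adapted table_trace_Rats by blast
  then show ?thesis unfolding Xcodes_def using x kmn by blast
qed

lemma Xcodes_imp_certifies:
  assumes E_enum: "\<And>n m. 2 \<le> n \<Longrightarrow> 2 \<le> m \<Longrightarrow> range (E n m) = fp_carrier n m"
    and "x \<in> Xcodes E R S"
  shows "\<exists>T. certifies (E_code E) (\<lambda>l. req_code (R l)) (S_code S) x T"
proof -
  obtain k n m p \<tau> where x: "x = kmnp_code k n m p" and kmn: "1 \<le> k" "2 \<le> n" "2 \<le> m"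
    and p: "\<forall>v\<in>{1..n}. \<forall>w\<in>{1..n}. \<forall>i\<in>{1..m}. \<forall>j\<in>{1..m}. 0 \<le> p i j v w \<and> p i j v w \<le> 1"
    and \<tau>: "approx_trace k n m E R \<tau>" "\<forall>g\<in>fp_carrier n m. Re (\<tau> g) \<in> \<rat> \<and> Im (\<tau> g) \<in> \<rat>"
      "adapted k n m E S p \<tau>"
    using assms(2) unfolding Xcodes_def Xset_def by blast
  let ?U = "relevant_words k n m E R S"
  have "?U \<subseteq> fp_carrier n m"
    using relevant_words_carrier[of E n m] E_enum[OF kmn(2,3)] by simp
  then have "\<forall>g\<in>?U. Re (\<tau> g) \<in> \<rat> \<and> Im (\<tau> g) \<in> \<rat> \<and> cmod (\<tau> g) \<le> 1"
    using \<tau>(1,2) unfolding approx_trace_def by blast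
  then obtain T where agree: "\<forall>g\<in>?U. table_trace T g = \<tau> g"
    and bound: "code_all (\<lambda>e. gnorm_le1 (snd (prod_decode e))) T"
    by (rule table_trace_exists[OF finite_relevant_words])
  have "\<forall>l\<in>{1..k}. req_relax k m (E n m) (table_trace T) (R l)"
  proof
    fix l assume l: "l \<in> {1..k}"
    then have "req_relax k m (E n m) (table_trace T) (R l) = req_relax k m (E n m) \<tau> (R l)"
      using agree req_words_subset_relevant_words by (intro req_relax_cong) blast
    then show "req_relax k m (E n m) (table_trace T) (R l)"
      using \<tau>(1) l unfolding approx_trace_def by blast
  qed
  moreover have "adapted k n m E S p (table_trace T) = adapted k n m E S p \<tau>"
    using agree S_words_subset_relevant_words by (intro adapted_cong) blast
  ultimately show ?thesis
    using certifies_kmnp_code_iff[OF kmn] p bound x \<tau>(3) by blast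
qed

theorem lemma4p2:
  fixes E :: "nat \<Rightarrow> nat \<Rightarrow> nat \<Rightarrow> fword"
    and R :: "nat \<Rightarrow> req"
    and S :: "nat \<Rightarrow> nat \<Rightarrow> nat \<Rightarrow> nat \<Rightarrow> nat \<Rightarrow> nat \<Rightarrow> nat \<Rightarrow> qelt"
  assumes E_enum: "\<And>n m. 2 \<le> n \<Longrightarrow> 2 \<le> m \<Longrightarrow> range (E n m) = fp_carrier n m"
    and E_eff: "computable (\<lambda>c. case list_decode c of [n, m, l] \<Rightarrow> word_code (E n m l) | _ \<Rightarrow> 0)"
    and R_enum: "R ` {1..} = UNIV"
    and R_eff: "computable (\<lambda>l. req_code (R l))"
    and S_eff: "computable (\<lambda>c. case list_decode c of
                   [v, w, i, j, k, n, m] \<Rightarrow> qelt_code (S v w i j k n m) | _ \<Rightarrow> 0)"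
    and S_approx: "\<And>n m v w i j k. 2 \<le> n \<Longrightarrow> 2 \<le> m \<Longrightarrow> v \<in> {1..n} \<Longrightarrow> w \<in> {1..n}
                   \<Longrightarrow> i \<in> {1..m} \<Longrightarrow> j \<in> {1..m} \<Longrightarrow> 1 \<le> k \<Longrightarrow>
                   cstar_norm n m (fgr_diff (fgr_mult m (spec_proj m v i) (spec_proj m w j))
                                            (qelt_val (E n m) (S v w i j k n m))) < 1 / real k"
  shows "re_set (Xcodes E R S)"
proof -
  let ?Q = "certifies (E_code E) (\<lambda>l. req_code (R l)) (S_code S)"
  have "rec_pred 2 (\<lambda>ys. ?Q (ys!0) (ys!1))"
    by (intro rec_pred_certifies computable_imp_rec_fn)
      (use E_eff R_eff S_eff in \<open>simp_all only: E_code_def S_code_def\<close>)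
  moreover have "Xcodes E R S = {x. \<exists>y. ?Q x y}"
    using certifies_imp_Xcodes Xcodes_imp_certifies[OF E_enum] by blast
  ultimately show ?thesis
    using re_set_Ex_rec_pred by metis
qed

end
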